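(* Let $A$ be a finite set. The map $F:R^+(A)\to R(A)$, $F(\overset{x}{<},\overset{y}{<})=(\overset{x}{<},\overset{y}{<}\setminus\overset{x}{<})$, is an order-preserving map $(R^+(A),\subseteq)\to(R(A),\sqsubseteq)$; the map $G$ from the barycentric subdivision $\mathrm{sd}(R(A),\sqsubseteq)$ to $(R^+(A),\subseteq)$ sending a chain $\overset{*}{<}_0\sqsubsetneq\overset{*}{<}_1\sqsubsetneq\dots\sqsubsetneq\overset{*}{<}_r$ to $(\overset{x}{<}_r,\overset{y}{<}_0)$ is order-preserving; and the maps $|F|:|(R^+(A),\subseteq)|\to|(R(A),\sqsubseteq)|$ and the composite \[ |(R(A),\sqsubseteq)|\cong|\mathrm{sd}(R(A),\sqsubseteq)|\xrightarrow{|G|}|(R^+(A),\subseteq)| \] (the first map being the standard homeomorphism of a poset's realization with that of its barycentric subdivision) are mutually inverse $\Sigma_A$-equivariant homotopy equivalences.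
   Context: A strict partial order is a transitive irreflexive relation; it is semi-linear if it is induced by a surjection $h:A\to\{1,\dots,l\}$ (i.e. $a<b$ iff $h(a)<h(b)$). For strict partial orders $<_1,<_2$, $<_1\bar\cup<_2$ denotes the transitive closure of their union, and $a(<_1\setminus<_2)b$ means $a<_1b$ and neither $a<_2b$ nor $b<_2a$. A double order on $A$ is a pair $\overset{*}{<}=(\overset{x}{<},\overset{y}{<})$ of strict partial orders on $A$ such that for all $a\ne b$ at least one of $a\overset{x}{<}b$, $b\overset{x}{<}a$, $a\overset{y}{<}b$, $b\overset{y}{<}a$ holds. It is regular if $\overset{x}{<}$ is semi-linear and $a\overset{x}{<}b$ implies neither $a\overset{y}{<}b$ nor $b\overset{y}{<}a$. A double order is semi-regular if it equals the componentwise union $\bar\cup$ of finitely many regular double orders. $R(A)$, $R^+(A)$ are the sets of regular, resp. semi-regular double orders. Partial orders on double orders: $\overset{*}{<}_1\subseteq\overset{*}{<}_2$ iff $\overset{x}{<}_1\subseteq\overset{x}{<}_2$ and $\overset{y}{<}_1\subseteq\overset{y}{<}_2$; $\overset{*}{<}_1\sqsubseteq\overset{*}{<}_2$ iff $\overset{x}{<}_1\subseteq\overset{x}{<}_2$ and $\overset{y}{<}_1\supseteq\overset{y}{<}_2$. The barycentric subdivision $\mathrm{sd}(P)$ of a poset $P$ is the poset of finite nonempty chains in $P$ ordered by inclusion; $|P|$ is the realization of the nerve. $\Sigma_A$ acts on double orders by $(\overset{x}{<},\overset{y}{<})\sigma=(\overset{x}{<}\sigma,\overset{y}{<}\sigma)$,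 $a(\overset{x}{<}\sigma)b$ iff $\sigma(a)\overset{x}{<}\sigma(b)$ (similarly for $y$). *)

theory Defs
  imports "HOL-Analysis.Analysis" "HOL-Combinatorics.Permutations"
begin

type_synonym 'a dord = "'a rel \<times> 'a rel"

definition spo :: "'a set \<Rightarrow> 'a rel \<Rightarrow> bool" where
  "spo A r \<longleftrightarrow> r \<subseteq> A \<times> A \<and> irrefl r \<and> trans r"

definition semilinear :: "'a set \<Rightarrow> 'a rel \<Rightarrow> bool" where
  "semilinear A r \<longleftrightarrow> (\<exists>(h::'a \<Rightarrow> nat) l. h ` A = {1..l} \<and>
      r = {(a,b). a \<in> A \<and> b \<in> A \<and> h a < h b})"

definition double_order :: "'a set \<Rightarrow> 'a dord \<Rightarrow> bool" where
  "double_order A d \<longleftrightarrow> spo A (fst d) \<and> spo A (snd d) \<and>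
     (\<forall>a\<in>A. \<forall>b\<in>A. a \<noteq> b \<longrightarrow>
        (a,b) \<in> fst d \<or> (b,a) \<in> fst d \<or> (a,b) \<in> snd d \<or> (b,a) \<in> snd d)"

definition regular :: "'a set \<Rightarrow> 'a dord \<Rightarrow> bool" where
  "regular A d \<longleftrightarrow> double_order A d \<and> semilinear A (fst d) \<and>
     (\<forall>a b. (a,b) \<in> fst d \<longrightarrow> (a,b) \<notin> snd d \<and> (b,a) \<notin> snd d)"

definition Reg :: "'a set \<Rightarrow> 'a dord set" where
  "Reg A = {d. regular A d}"

definition SemiReg :: "'a set \<Rightarrow> 'a dord set" where
  "SemiReg A = {d. double_order A d \<and>
     (\<exists>S. finite S \<and> S \<noteq> {} \<and> S \<subseteq> Reg A \<and>
          d = (trancl (\<Union>(fst ` S)), trancl (\<Union>(snd ` S))))}"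

text \<open>r1 \ r2 : pairs of r1 incomparable in r2.\<close>
definition rdiff :: "'a rel \<Rightarrow> 'a rel \<Rightarrow> 'a rel" where
  "rdiff r1 r2 = {(a,b). (a,b) \<in> r1 \<and> (a,b) \<notin> r2 \<and> (b,a) \<notin> r2}"

definition dsub :: "'a dord \<Rightarrow> 'a dord \<Rightarrow> bool" where
  "dsub d1 d2 \<longleftrightarrow> fst d1 \<subseteq> fst d2 \<and> snd d1 \<subseteq> snd d2"

definition dsq :: "'a dord \<Rightarrow> 'a dord \<Rightarrow> bool" where
  "dsq d1 d2 \<longleftrightarrow> fst d1 \<subseteq> fst d2 \<and> snd d2 \<subseteq> snd d1"

definition Fmap :: "'a dord \<Rightarrow> 'a dord" where
  "Fmap d = (fst d, rdiff (snd d) (fst d))"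

text \<open>Barycentric subdivision: finite nonempty chains of a poset (P, le).\<close>
definition pchains :: "'b set \<Rightarrow> ('b \<Rightarrow> 'b \<Rightarrow> bool) \<Rightarrow> 'b set set" where
  "pchains P le = {c. c \<subseteq> P \<and> finite c \<and> c \<noteq> {} \<and> (\<forall>p\<in>c. \<forall>q\<in>c. le p q \<or> le q p)}"

definition chain_max :: "('b \<Rightarrow> 'b \<Rightarrow> bool) \<Rightarrow> 'b set \<Rightarrow> 'b" where
  "chain_max le c = (THE m. m \<in> c \<and> (\<forall>p\<in>c. le p m))"

definition chain_min :: "('b \<Rightarrow> 'b \<Rightarrow> bool) \<Rightarrow> 'b set \<Rightarrow> 'b" where
  "chain_min le c = (THE m. m \<in> c \<and> (\<forall>p\<in>c. le m p))"

definition Gmap :: "'a dord set \<Rightarrow> 'a dord" where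
  "Gmap c = (fst (chain_max dsq c), snd (chain_min dsq c))"

text \<open>Geometric realization of the nerve of a finite poset (P, le): the functions
  P -> [0,1] (zero outside P) summing to 1 whose support is a chain, with the
  (product = Euclidean) topology.\<close>
definition realization :: "'b set \<Rightarrow> ('b \<Rightarrow> 'b \<Rightarrow> bool) \<Rightarrow> ('b \<Rightarrow> real) set" where
  "realization P le = {t. (\<forall>p. 0 \<le> t p) \<and> (\<forall>p. p \<notin> P \<longrightarrow> t p = 0) \<and> sum t P = 1 \<and>
       (\<forall>p q. 0 < t p \<and> 0 < t q \<longrightarrow> le p q \<or> le q p)}"

text \<open>Realization |f| of an order-preserving map f on P (affine on simplices).\<close>
definition realize_map :: "'b set \<Rightarrow> ('b \<Rightarrow> 'c) \<Rightarrow> ('b \<Rightarrow> real) \<Rightarrow> ('c \<Rightarrow> real)" where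
  "realize_map P f t = (\<lambda>q. \<Sum>p\<in>{p\<in>P. f p = q}. t p)"

text \<open>Standard homeomorphism |sd P| -> |P|: a vertex (chain c) goes to the barycenter of c.\<close>
definition bary :: "'b set \<Rightarrow> ('b \<Rightarrow> 'b \<Rightarrow> bool) \<Rightarrow> ('b set \<Rightarrow> real) \<Rightarrow> ('b \<Rightarrow> real)" where
  "bary P le t = (\<lambda>p. \<Sum>c\<in>{c\<in>pchains P le. p \<in> c}. t c / real (card c))"

definition act_rel :: "('a \<Rightarrow> 'a) \<Rightarrow> 'a rel \<Rightarrow> 'a rel" where
  "act_rel \<sigma> r = {(a,b). (\<sigma> a, \<sigma> b) \<in> r}"

definition act :: "('a \<Rightarrow> 'a) \<Rightarrow> 'a dord \<Rightarrow> 'a dord" where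
  "act \<sigma> d = (act_rel \<sigma> (fst d), act_rel \<sigma> (snd d))"

definition act_real :: "'a dord set \<Rightarrow> ('a \<Rightarrow> 'a) \<Rightarrow> ('a dord \<Rightarrow> real) \<Rightarrow> ('a dord \<Rightarrow> real)" where
  "act_real P \<sigma> t = realize_map P (act \<sigma>) t"

end

(*
  F and G are order preserving and commute with the permutations of A, so |F| and |G| o |sd|^-1
  are continuous and equivariant; the equivariant homotopies are assembled from two moves on
  realizations. A straight-line homotopy between two maps into |Q| stays in |Q| when at every point
  the two supports together form a chain; and the realizations of monotone maps f <= g are
  homotopic by sweeping the weight from f to g from the top down.

  On |R(A)|, every vertex comparable with all members of a chain c is comparable with F (G c), so
  |F| o |G| o |sd|^-1 is straight-line homotopic to the identity. On |R+(A)|, the identity is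
  straight-line homotopic to |L| o |sd|^-1 for the last vertex map L; G (F ` c) <= L c for every
  chain c, so |G o sd F| and |L| are homotopic by sweeping; and |sd| o |sd F| is straight-line
  homotopic to |F| o |sd|, which after composing with |G| o |sd|^-1 and |sd|^-1 connects
  |G o sd F| o |sd|^-1 with |G| o |sd|^-1 o |F|.
*)
theory Submission
  imports Defs
begin

section \<open>Realizations of finite posets\<close>

definition partial_orderp :: "('b \<Rightarrow> 'b \<Rightarrow> bool) \<Rightarrow> bool" where
  "partial_orderp le \<longleftrightarrow> reflp le \<and> antisymp le \<and> transp le"

lemma partial_orderpD:
  assumes "partial_orderp le"
  shows partial_orderp_refl: "le p p"
    and partial_orderp_antisym: "le p q \<Longrightarrow> le q p \<Longrightarrow> p = q"
    and partial_orderp_trans: "le p q \<Longrightarrow> le q r \<Longrightarrow> le p r"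
  using assms unfolding partial_orderp_def by (auto dest: reflpD antisympD transpD)

lemma partial_orderp_converse: "partial_orderp le \<Longrightarrow> partial_orderp (\<lambda>p q. le q p)"
  unfolding partial_orderp_def by (auto simp: reflp_def antisymp_def transp_def)

lemma partial_orderp_subset: "partial_orderp ((\<subseteq>) :: 'b set \<Rightarrow> 'b set \<Rightarrow> bool)"
  by (auto simp: partial_orderp_def reflp_def antisymp_def transp_def)

lemma pchainsD:
  assumes "c \<in> pchains P le"
  shows "c \<subseteq> P" "finite c" "c \<noteq> {}" "p \<in> c \<Longrightarrow> q \<in> c \<Longrightarrow> le p q \<or> le q p"
  using assms by (auto simp: pchains_def)

lemma card_pchains_pos: "c \<in> pchains P le \<Longrightarrow> 0 < card c"
  by (simp add: pchains_def card_gt_0_iff)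

lemma finite_pchains: "finite P \<Longrightarrow> finite (pchains P le)"
  by (rule finite_subset[of _ "Pow P"]) (auto simp: pchains_def)

lemma chain_has_max:
  assumes "partial_orderp le" "finite c" "c \<noteq> {}" "\<forall>p\<in>c. \<forall>q\<in>c. le p q \<or> le q p"
  shows "\<exists>m\<in>c. \<forall>p\<in>c. le p m"
  using assms(2-4)
proof (induction c rule: finite_ne_induct)
  case (singleton x)
  then show ?case using partial_orderp_refl[OF assms(1)] by auto
next
  case (insert x F)
  then obtain m where m: "m \<in> F" "\<forall>p\<in>F. le p m" by auto
  show ?case
  proof (cases "le x m")
    case False
    then have "le m x" using insert.prems m(1) by auto
    then show ?thesis
      using m partial_orderp_refl[OF assms(1)] partial_orderp_trans[OF assms(1)] by blast
  qed (use m in auto)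
qed

lemma chain_max_eq:
  "partial_orderp le \<Longrightarrow> m \<in> c \<Longrightarrow> \<forall>p\<in>c. le p m \<Longrightarrow> chain_max le c = m"
  unfolding chain_max_def by (rule the_equality) (auto dest: partial_orderp_antisym)

lemma chain_min_eq:
  "partial_orderp le \<Longrightarrow> m \<in> c \<Longrightarrow> \<forall>p\<in>c. le m p \<Longrightarrow> chain_min le c = m"
  unfolding chain_min_def by (rule the_equality) (auto dest: partial_orderp_antisym)

lemma chain_max:
  assumes "partial_orderp le" "c \<in> pchains P le"
  shows chain_max_mem: "chain_max le c \<in> c"
    and chain_max_ge: "p \<in> c \<Longrightarrow> le p (chain_max le c)"
proof -
  obtain m where "m \<in> c" "\<forall>p\<in>c. le p m"
    using chain_has_max[OF assms(1) pchainsD(2,3)[OF assms(2)]] pchainsD(4)[OF assms(2)] by blast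
  then show "chain_max le c \<in> c" "p \<in> c \<Longrightarrow> le p (chain_max le c)"
    using chain_max_eq[OF assms(1)] by auto
qed

lemma chain_min:
  assumes "partial_orderp le" "c \<in> pchains P le"
  shows chain_min_mem: "chain_min le c \<in> c"
    and chain_min_le: "p \<in> c \<Longrightarrow> le (chain_min le c) p"
proof -
  have "chain_min le c = chain_max (\<lambda>p q. le q p) c"
    unfolding chain_min_def chain_max_def ..
  moreover have "c \<in> pchains P (\<lambda>p q. le q p)"
    using assms(2) by (auto simp: pchains_def)
  ultimately show "chain_min le c \<in> c" "p \<in> c \<Longrightarrow> le (chain_min le c) p"
    using chain_max[OF partial_orderp_converse[OF assms(1)]] by auto
qed

lemma chain_max_mono:
  assumes "partial_orderp le" "c \<in> pchains P le" "c' \<in> pchains P le" "c \<subseteq> c'"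
  shows "le (chain_max le c) (chain_max le c')"
  using chain_max_mem[OF assms(1,2)] chain_max_ge[OF assms(1,3)] assms(4) by blast

lemma realizationD:
  assumes "t \<in> realization P le"
  shows "0 \<le> t p" "p \<notin> P \<Longrightarrow> t p = 0" "sum t P = 1"
    "0 < t p \<Longrightarrow> 0 < t q \<Longrightarrow> le p q \<or> le q p"
  using assms by (auto simp: realization_def)

lemma realization_pos_mem: "t \<in> realization P le \<Longrightarrow> 0 < t p \<Longrightarrow> p \<in> P"
  using realizationD(2) by force

lemma continuous_map_fun_iff:
  "continuous_map X euclidean (h :: 'x \<Rightarrow> 'c \<Rightarrow> real) \<longleftrightarrow>
     (\<forall>q. continuous_map X euclideanreal (\<lambda>x. h x q))"
proof -
  have "continuous_map X euclidean h = continuous_map X (product_topology (\<lambda>_. euclidean) UNIV) h"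
    by (simp add: euclidean_product_topology)
  then show ?thesis by (simp add: continuous_map_componentwise_UNIV)
qed

lemma continuous_map_in_fun_set_iff:
  "continuous_map X (top_of_set S) (h :: 'x \<Rightarrow> 'c \<Rightarrow> real) \<longleftrightarrow>
     (\<forall>q. continuous_map X euclideanreal (\<lambda>x. h x q)) \<and> (\<forall>x\<in>topspace X. h x \<in> S)"
  by (simp only: continuous_map_in_subtopology continuous_map_fun_iff Pi_iff)

lemma continuous_map_fun_component:
  "continuous_map X (top_of_set S) (h :: 'x \<Rightarrow> 'c \<Rightarrow> real) \<Longrightarrow>
     continuous_map X euclideanreal (\<lambda>x. h x q)"
  by (simp add: continuous_map_in_fun_set_iff)

lemma realization_closed: "closed (realization P le)"
proof -
  have eq: "realization P le = {t. (\<forall>p. 0 \<le> t p) \<and> (\<forall>p. p \<notin> P \<longrightarrow> t p = 0) \<and> sum t P = 1 \<and>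
      (\<forall>p q. \<not> (le p q \<or> le q p) \<longrightarrow> t p \<le> 0 \<or> t q \<le> 0)}"
    unfolding realization_def by (auto simp: not_less) (meson not_le)+
  have "open {x. c}" for c :: bool
    by (cases c) auto
  then show ?thesis
    unfolding eq
    by (intro closed_Collect_conj closed_Collect_all closed_Collect_imp closed_Collect_disj
        closed_Collect_le closed_Collect_eq continuous_intros continuous_on_product_coordinates)
qed

lemma compact_realization:
  assumes "finite P"
  shows "compact (realization P le)"
proof -
  define K where "K = PiE UNIV (\<lambda>p. if p \<in> P then {0..1::real} else {0})"
  have "compactin (product_topology (\<lambda>_. euclidean) UNIV) K"
    unfolding K_def compactin_PiE by auto
  then have "compact K"
    by (simp add: euclidean_product_topology)
  moreover have "realization P le \<subseteq> K"
  proof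
    fix t assume t: "t \<in> realization P le"
    have "t p \<le> 1" if "p \<in> P" for p
      using sum_nonneg_leq_bound[OF assms, of t 1 p] realizationD[OF t] that by auto
    then show "t \<in> K" unfolding K_def using realizationD[OF t] by (auto simp: PiE_iff)
  qed
  ultimately show ?thesis
    using compact_Int_closed[OF _ realization_closed] by (metis inf.absorb2)
qed

lemma Hausdorff_space_fun_set: "Hausdorff_space (top_of_set (S :: ('b \<Rightarrow> real) set))"
  using Hausdorff_space_product_topology[of "\<lambda>_::'b. euclideanreal" UNIV]
  by (simp add: euclidean_product_topology Hausdorff_space_subtopology)

lemma realize_map_nonneg: "(\<And>p. 0 \<le> t p) \<Longrightarrow> 0 \<le> realize_map P f t q"
  by (auto simp: realize_map_def intro: sum_nonneg)

lemma realize_map_posE: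
  assumes "0 < realize_map P f t q" "\<And>p. 0 \<le> t p" "finite P"
  obtains p where "p \<in> P" "f p = q" "0 < t p"
proof -
  have "\<exists>p\<in>{p\<in>P. f p = q}. t p \<noteq> 0"
    using assms(1) unfolding realize_map_def by (metis (no_types, lifting) less_irrefl sum.neutral)
  then show ?thesis using that assms(2) by (auto simp: order_less_le)
qed

lemma sum_realize_map:
  assumes "finite P" "finite Q" "f ` P \<subseteq> Q"
  shows "sum (realize_map P f t) Q = sum t P"
  unfolding realize_map_def using sum.group[OF assms] by simp

lemma realize_map_in_realization:
  assumes "finite P" "finite Q" "f ` P \<subseteq> Q" "monotone_on P le le' f"
    and t: "t \<in> realization P le"
  shows "realize_map P f t \<in> realization Q le'"
proof -
  have nn: "\<And>p. 0 \<le> t p" using realizationD(1)[OF t] .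
  have "realize_map P f t q = 0" if "q \<notin> Q" for q
    unfolding realize_map_def using assms(3) that by (intro sum.neutral) auto
  moreover have "le' q q' \<or> le' q' q"
    if pos: "0 < realize_map P f t q" "0 < realize_map P f t q'" for q q'
  proof -
    obtain p where p: "p \<in> P" "f p = q" "0 < t p"
      using realize_map_posE[OF pos(1) nn assms(1)] .
    obtain p' where p': "p' \<in> P" "f p' = q'" "0 < t p'"
      using realize_map_posE[OF pos(2) nn assms(1)] .
    show ?thesis
      using realizationD(4)[OF t p(3) p'(3)] monotone_onD[OF assms(4)] p p' by blast
  qed
  ultimately show ?thesis
    using realize_map_nonneg[OF nn] sum_realize_map[OF assms(1-3)] realizationD(3)[OF t]
    by (auto simp: realization_def)
qed

lemma realize_map_comp:
  assumes "finite P" "finite Q" "f ` P \<subseteq> Q"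
  shows "realize_map Q g (realize_map P f t) = realize_map P (g \<circ> f) t"
proof
  fix r
  have "realize_map Q g (realize_map P f t) r =
      (\<Sum>q\<in>{q\<in>Q. g q = r}. \<Sum>p\<in>{p\<in>{p\<in>P. g (f p) = r}. f p = q}. t p)"
    unfolding realize_map_def by (intro sum.cong) auto
  also have "\<dots> = (\<Sum>p\<in>{p\<in>P. g (f p) = r}. t p)"
    by (rule sum.group) (use assms in auto)
  finally show "realize_map Q g (realize_map P f t) r = realize_map P (g \<circ> f) t r"
    by (simp add: realize_map_def)
qed

lemma realize_map_cong:
  "(\<And>p. p \<in> P \<Longrightarrow> f p = g p) \<Longrightarrow> (\<And>p. p \<in> P \<Longrightarrow> t p = u p) \<Longrightarrow>
     realize_map P f t = realize_map P g u"
  unfolding realize_map_def by (intro ext sum.cong) auto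

lemma realize_map_add:
  "realize_map P f (\<lambda>p. t p + u p) = (\<lambda>q. realize_map P f t q + realize_map P f u q)"
  by (auto simp: realize_map_def sum.distrib)

lemma realize_map_lincomb:
  "realize_map P f (\<lambda>p. a * t p + b * u p) =
     (\<lambda>q. a * realize_map P f t q + b * realize_map P f u q)"
  by (auto simp: realize_map_def sum.distrib sum_distrib_left)

lemma continuous_map_realize_map:
  assumes "finite P" "finite Q" "f ` P \<subseteq> Q" "monotone_on P le le' f"
  shows "continuous_map (top_of_set (realization P le)) (top_of_set (realization Q le'))
           (realize_map P f)"
  unfolding continuous_map_in_fun_set_iff
proof (intro conjI allI ballI)
  fix q
  show "continuous_map (top_of_set (realization P le)) euclideanreal (\<lambda>t. realize_map P f t q)"
  proof -
    have "continuous_map (top_of_set (realization P le)) euclideanreal (\<lambda>t. t p)" for p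
      by (rule continuous_map_fun_component[of _ UNIV]) (simp add: continuous_map_from_subtopology)
    then show ?thesis
      unfolding realize_map_def by (intro continuous_map_sum) (simp_all add: assms(1))
  qed
qed (use realize_map_in_realization[OF assms] in auto)

subsection \<open>The barycentric subdivision\<close>

text \<open>Points of \<open>|sd P|\<close> up to normalization: the proofs that \<open>bary\<close> is injective and surjective
  remove or add the weight of one chain at a time.\<close>
definition sd_weights :: "'b set \<Rightarrow> ('b \<Rightarrow> 'b \<Rightarrow> bool) \<Rightarrow> ('b set \<Rightarrow> real) \<Rightarrow> bool" where
  "sd_weights P le u \<longleftrightarrow> (\<forall>c. 0 \<le> u c) \<and> (\<forall>c. c \<notin> pchains P le \<longrightarrow> u c = 0) \<and>
     (\<forall>c c'. 0 < u c \<longrightarrow> 0 < u c' \<longrightarrow> c \<subseteq> c' \<or> c' \<subseteq> c)"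

definition sd_support :: "'b set \<Rightarrow> ('b \<Rightarrow> 'b \<Rightarrow> bool) \<Rightarrow> ('b set \<Rightarrow> real) \<Rightarrow> 'b set set" where
  "sd_support P le u = {c \<in> pchains P le. 0 < u c}"

lemma sd_weightsD:
  assumes "sd_weights P le u"
  shows "0 \<le> u c" "c \<notin> pchains P le \<Longrightarrow> u c = 0" "0 < u c \<Longrightarrow> 0 < u c' \<Longrightarrow> c \<subseteq> c' \<or> c' \<subseteq> c"
  using assms by (auto simp: sd_weights_def)

lemma realization_sd_iff:
  "u \<in> realization (pchains P le) (\<subseteq>) \<longleftrightarrow> sd_weights P le u \<and> sum u (pchains P le) = 1"
  unfolding realization_def sd_weights_def by (auto simp: imp_conjL)

lemma sd_weights_fun_upd:
  assumes "sd_weights P le u" "C \<in> pchains P le" "\<And>c. c \<in> sd_support P le u \<Longrightarrow> c \<subseteq> C" "0 \<le> a"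
  shows "sd_weights P le (u(C := a))"
proof -
  have "c \<subseteq> C" if "0 < u c" for c
    using assms(1,3) that by (force simp: sd_weights_def sd_support_def)
  then show ?thesis
    using assms(1,2,4) unfolding sd_weights_def by auto
qed

lemma sd_support_fun_upd_0: "sd_support P le (u(C := 0)) = sd_support P le u - {C}"
  by (auto simp: sd_support_def)

lemma sd_weights_eq_0_iff:
  "sd_weights P le u \<Longrightarrow> u = (\<lambda>_. 0) \<longleftrightarrow> sd_support P le u = {}"
  unfolding sd_weights_def sd_support_def by (force simp: fun_eq_iff order_less_le)

lemma Union_sd_support_mem:
  assumes "finite P" "sd_weights P le u" "sd_support P le u \<noteq> {}"
  shows "\<Union>(sd_support P le u) \<in> sd_support P le u"
  by (rule Union_in_chain)
     (use assms finite_pchains[OF assms(1)] in \<open>auto simp: subset_chain_def sd_support_def sd_weights_def\<close>)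

lemma sum_bary:
  assumes "finite P" "\<And>c. c \<notin> pchains P le \<Longrightarrow> u c = 0"
  shows "sum (bary P le u) P = sum u (pchains P le)"
proof -
  have fin: "finite (pchains P le)" by (rule finite_pchains[OF assms(1)])
  have "sum (bary P le u) P =
      (\<Sum>p\<in>P. \<Sum>c\<in>pchains P le. if p \<in> c then u c / real (card c) else 0)"
    unfolding bary_def by (rule sum.cong[OF refl]) (simp add: sum.inter_filter[OF fin])
  also have "\<dots> = (\<Sum>c\<in>pchains P le. \<Sum>p\<in>P. if p \<in> c then u c / real (card c) else 0)"
    by (rule sum.swap)
  also have "\<dots> = (\<Sum>c\<in>pchains P le. u c)"
  proof (intro sum.cong refl)
    fix c assume c: "c \<in> pchains P le"
    then have "{p \<in> P. p \<in> c} = c" using pchainsD(1)[OF c] by blast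
    then have "(\<Sum>p\<in>P. if p \<in> c then u c / real (card c) else 0) = (\<Sum>p\<in>c. u c / real (card c))"
      using sum.inter_filter[OF assms(1), of "\<lambda>_. u c / real (card c)" "\<lambda>p. p \<in> c"] by simp
    also have "\<dots> = u c" using card_pchains_pos[OF c] by simp
    finally show "(\<Sum>p\<in>P. if p \<in> c then u c / real (card c) else 0) = u c" .
  qed
  finally show ?thesis .
qed

lemma bary_ge:
  assumes "finite P" "\<And>c. 0 \<le> u c" "c \<in> pchains P le" "p \<in> c"
  shows "u c / real (card c) \<le> bary P le u p"
  unfolding bary_def by (rule member_le_sum) (use assms finite_pchains[OF assms(1)] in auto)

lemma bary_nonneg: "(\<And>c. 0 \<le> u c) \<Longrightarrow> 0 \<le> bary P le u p"
  unfolding bary_def by (intro sum_nonneg) auto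

lemma bary_zero: "bary P le (\<lambda>_. 0) = (\<lambda>_. 0)"
  by (simp add: bary_def fun_eq_iff)

lemma bary_pos_iff:
  assumes "finite P" "sd_weights P le u"
  shows "0 < bary P le u p \<longleftrightarrow> p \<in> \<Union>(sd_support P le u)"
proof
  assume "0 < bary P le u p"
  then have "\<exists>c\<in>{c \<in> pchains P le. p \<in> c}. u c / real (card c) \<noteq> 0"
    unfolding bary_def by (metis (no_types, lifting) less_irrefl sum.neutral)
  then obtain c where "c \<in> pchains P le" "p \<in> c" "u c \<noteq> 0" by auto
  then show "p \<in> \<Union>(sd_support P le u)"
    using sd_weightsD(1)[OF assms(2), of c] by (auto simp: sd_support_def)
next
  assume "p \<in> \<Union>(sd_support P le u)"
  then obtain c where c: "c \<in> pchains P le" "p \<in> c" "0 < u c" by (auto simp: sd_support_def)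
  have "0 < u c / real (card c)" using c card_pchains_pos[OF c(1)] by simp
  also have "\<dots> \<le> bary P le u p"
    by (rule bary_ge) (use assms c sd_weightsD(1)[OF assms(2)] in auto)
  finally show "0 < bary P le u p" .
qed

lemma bary_pos_if_mem:
  assumes "finite P" "u \<in> realization (pchains P le) (\<subseteq>)" "0 < u c" "p \<in> c"
  shows "0 < bary P le u p"
  using assms realization_pos_mem[OF assms(2,3)] realization_sd_iff[of u P le]
  by (auto simp: bary_pos_iff sd_support_def)

lemma bary_fun_upd:
  assumes "finite P" "M \<in> pchains P le"
  shows "bary P le (u(M := a)) p =
           bary P le u p + (if p \<in> M then (a - u M) / real (card M) else 0)"
proof (cases "p \<in> M")
  case True
  have fin: "finite {c \<in> pchains P le. p \<in> c}" using finite_pchains[OF assms(1)] by simp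
  have M: "M \<in> {c \<in> pchains P le. p \<in> c}" using assms True by simp
  show ?thesis unfolding bary_def
    using sum.remove[OF fin M, of "\<lambda>c. (u(M := a)) c / real (card c)"]
      sum.remove[OF fin M, of "\<lambda>c. u c / real (card c)"] True
    by (simp add: diff_divide_distrib)
next
  case False
  then show ?thesis unfolding bary_def by (simp, intro sum.cong refl) auto
qed

lemma bary_in_realization:
  assumes "finite P" "u \<in> realization (pchains P le) (\<subseteq>)"
  shows "bary P le u \<in> realization P le"
proof -
  have u: "sd_weights P le u" "sum u (pchains P le) = 1"
    using assms(2) by (simp_all add: realization_sd_iff)
  have "bary P le u p = 0" if "p \<notin> P" for p
    unfolding bary_def using that by (intro sum.neutral) (auto simp: pchains_def)
  moreover have "le p q \<or> le q p" if "0 < bary P le u p" "0 < bary P le u q" for p q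
  proof -
    have "p \<in> \<Union>(sd_support P le u)" "q \<in> \<Union>(sd_support P le u)"
      using that by (simp_all add: bary_pos_iff[OF assms(1) u(1)])
    then obtain c c' where "c \<in> sd_support P le u" "p \<in> c" "c' \<in> sd_support P le u" "q \<in> c'"
      by blast
    moreover from this have "c \<subseteq> c' \<or> c' \<subseteq> c"
      using sd_weightsD(3)[OF u(1)] by (auto simp: sd_support_def)
    ultimately obtain d where "d \<in> pchains P le" "p \<in> d" "q \<in> d"
      by (auto simp: sd_support_def)
    then show ?thesis by (rule pchainsD(4))
  qed
  ultimately show ?thesis
    using bary_nonneg[OF sd_weightsD(1)[OF u(1)]] sum_bary[OF assms(1) sd_weightsD(2)[OF u(1)]] u(2)
    by (auto simp: realization_def)
qed

text \<open>Together with \<open>bary_pos_iff\<close>, which locates the top chain \<open>M\<close> of the support,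
  this recovers the weight of \<open>M\<close> from \<open>bary P le u\<close>.\<close>
lemma bary_top_chain_weight:
  assumes "finite P" "sd_weights P le u" and M: "M = \<Union>(sd_support P le u)" "M \<in> sd_support P le u"
  shows "u M / real (card M) = Min (bary P le u ` M)"
proof -
  have Mc: "M \<in> pchains P le" "finite M" "M \<noteq> {}"
    using M(2) pchainsD(2,3)[of M P le] by (auto simp: sd_support_def)
  let ?S = "sd_support P le u - {M}"
  obtain p0 where p0: "p0 \<in> M" "p0 \<notin> \<Union>?S"
  proof (cases "?S = {}")
    case True
    then show ?thesis using that Mc(3) by blast
  next
    case False
    have "\<Union>?S \<in> ?S"
      by (rule Union_in_chain)
         (use False finite_pchains[OF assms(1)] sd_weightsD(3)[OF assms(2)] in
           \<open>auto simp: subset_chain_def sd_support_def\<close>)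
    moreover have "\<Union>?S \<subseteq> M" using M(1) by blast
    ultimately show ?thesis using that by blast
  qed
  have "bary P le u p0 = u M / real (card M)"
  proof -
    have fin: "finite {c \<in> pchains P le. p0 \<in> c}" using finite_pchains[OF assms(1)] by simp
    have "bary P le u p0 = u M / real (card M) + (\<Sum>c\<in>{c \<in> pchains P le. p0 \<in> c} - {M}. u c / real (card c))"
      unfolding bary_def by (rule sum.remove[OF fin]) (use Mc p0 in simp)
    also have "(\<Sum>c\<in>{c \<in> pchains P le. p0 \<in> c} - {M}. u c / real (card c)) = 0"
    proof (rule sum.neutral, intro ballI)
      fix c assume c: "c \<in> {c \<in> pchains P le. p0 \<in> c} - {M}"
      then have "c \<notin> sd_support P le u" using p0(2) by blast
      then have "u c = 0" using c sd_weightsD(1)[OF assms(2), of c] by (auto simp: sd_support_def)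
      then show "u c / real (card c) = 0" by simp
    qed
    finally show ?thesis by simp
  qed
  moreover have "u M / real (card M) \<le> bary P le u p" if "p \<in> M" for p
    by (rule bary_ge) (use assms Mc that sd_weightsD(1)[OF assms(2)] in auto)
  ultimately show ?thesis
    using p0(1) Mc(2) by (intro Min_eqI[symmetric]) (auto intro!: rev_image_eqI[of p0])
qed

lemma sd_support_empty_iff: "sd_support P le v = {} \<longleftrightarrow> \<Union>(sd_support P le v) = {}"
  using pchainsD(3) by (auto simp: sd_support_def)

lemma Union_sd_support_eq:
  assumes "finite P" "sd_weights P le u" "sd_weights P le u'" "bary P le u = bary P le u'"
  shows "\<Union>(sd_support P le u) = \<Union>(sd_support P le u')"
proof -
  have "p \<in> \<Union>(sd_support P le u) \<longleftrightarrow> p \<in> \<Union>(sd_support P le u')" for p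
    using bary_pos_iff[OF assms(1,2), of p] bary_pos_iff[OF assms(1,3), of p] assms(4) by simp
  then show ?thesis by blast
qed

lemma bary_eq_top_chain:
  assumes "finite P" "sd_weights P le u" "sd_weights P le u'" "bary P le u = bary P le u'"
    and "sd_support P le u \<noteq> {}"
  defines "M \<equiv> \<Union>(sd_support P le u)"
  shows "M \<in> sd_support P le u" "M \<in> sd_support P le u'" "u M = u' M"
proof -
  note Union_eq = Union_sd_support_eq[OF assms(1-4)]
  have "sd_support P le u' \<noteq> {}"
    using assms(5) Union_eq by (simp only: sd_support_empty_iff not_False_eq_True)
  then show M: "M \<in> sd_support P le u" "M \<in> sd_support P le u'"
    using Union_sd_support_mem[OF assms(1,2,5)] Union_sd_support_mem[OF assms(1,3)] Union_eq
    unfolding M_def by simp_all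
  have "u M / real (card M) = u' M / real (card M)"
    using bary_top_chain_weight[OF assms(1,2) meta_eq_to_obj_eq[OF M_def] M(1)]
      bary_top_chain_weight[OF assms(1,3) _ M(2)] Union_eq assms(4)
    unfolding M_def by simp
  then show "u M = u' M"
    using card_pchains_pos[of M P le] M(1) by (simp add: sd_support_def)
qed

lemma bary_eq_imp_sd_weights_eq:
  assumes "finite P"
  shows "sd_weights P le u \<Longrightarrow> sd_weights P le u' \<Longrightarrow> bary P le u = bary P le u' \<Longrightarrow> u = u'"
proof (induction "card (sd_support P le u)" arbitrary: u u' rule: less_induct)
  case less
  show ?case
  proof (cases "sd_support P le u = {}")
    case True
    then have "sd_support P le u' = {}"
      using Union_sd_support_eq[OF assms less.prems] by (simp only: sd_support_empty_iff)
    then show ?thesis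
      using True sd_weights_eq_0_iff[OF less.prems(1)] sd_weights_eq_0_iff[OF less.prems(2)] by simp
  next
    case False
    define M where "M = \<Union>(sd_support P le u)"
    note M = bary_eq_top_chain[OF assms less.prems False, folded M_def]
    have Mc: "M \<in> pchains P le" using M(1) by (simp add: sd_support_def)
    have "u(M := 0) = u'(M := 0)"
    proof (rule less.hyps)
      show "card (sd_support P le (u(M := 0))) < card (sd_support P le u)"
        unfolding sd_support_fun_upd_0
        by (rule card_Diff1_less[OF _ M(1)]) (simp add: sd_support_def finite_pchains[OF assms])
      show "sd_weights P le (u(M := 0))" "sd_weights P le (u'(M := 0))"
        using less.prems(1,2) by (auto simp: sd_weights_def)
      show "bary P le (u(M := 0)) = bary P le (u'(M := 0))"
        using less.prems(3) M(3) by (simp add: fun_eq_iff bary_fun_upd[OF assms Mc])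
    qed
    show ?thesis
    proof
      fix c
      show "u c = u' c"
        using fun_cong[OF \<open>u(M := 0) = u'(M := 0)\<close>, of c] M(3) by (cases "c = M") auto
    qed
  qed
qed

lemma bary_fun_upd_top:
  assumes "finite P" "sd_weights P le u" "C \<in> pchains P le" "p1 \<in> C" "\<not> 0 < bary P le u p1"
    and "\<And>p. 0 < bary P le u p \<Longrightarrow> p \<in> C" "0 \<le> a"
  shows "sd_weights P le (u(C := a))"
    and "bary P le (u(C := a)) = (\<lambda>p. bary P le u p + (if p \<in> C then a / real (card C) else 0))"
proof -
  have "c \<subseteq> C" if "c \<in> sd_support P le u" for c
  proof
    fix p assume "p \<in> c"
    then have "0 < bary P le u p" using that by (auto simp: bary_pos_iff[OF assms(1,2)])
    then show "p \<in> C" by (rule assms(6))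
  qed
  then show "sd_weights P le (u(C := a))" by (rule sd_weights_fun_upd[OF assms(2,3) _ assms(7)])
  have "u C = 0"
  proof (rule ccontr)
    assume "u C \<noteq> 0"
    then have "C \<in> sd_support P le u"
      using assms(3) sd_weightsD(1)[OF assms(2), of C] by (simp add: sd_support_def)
    then have "0 < bary P le u p1" using assms(4) by (auto simp: bary_pos_iff[OF assms(1,2)])
    then show False using assms(5) by simp
  qed
  then show "bary P le (u(C := a)) = (\<lambda>p. bary P le u p + (if p \<in> C then a / real (card C) else 0))"
    by (simp add: fun_eq_iff bary_fun_upd[OF assms(1,3)])
qed

text \<open>Induction on the size of the support of \<open>s\<close>: subtract its minimum on the support \<open>C\<close>
  from \<open>s\<close> on \<open>C\<close> and put the corresponding weight on the chain \<open>C\<close> itself.\<close>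
lemma bary_surj:
  assumes "finite P"
  shows "(\<forall>p. 0 \<le> s p) \<Longrightarrow> (\<forall>p. p \<notin> P \<longrightarrow> s p = 0) \<Longrightarrow>
    (\<forall>p q. 0 < s p \<longrightarrow> 0 < s q \<longrightarrow> le p q \<or> le q p) \<Longrightarrow> \<exists>u. sd_weights P le u \<and> bary P le u = s"
proof (induction "card {p \<in> P. 0 < s p}" arbitrary: s rule: less_induct)
  case less
  define C where "C = {p \<in> P. 0 < s p}"
  show ?case
  proof (cases "C = {}")
    case True
    have "s p = 0" for p
      using less.prems(1,2) True unfolding C_def by (cases "p \<in> P") (auto simp: order_less_le)
    then have "s = (\<lambda>_. 0)" by blast
    then show ?thesis using bary_zero[of P le] by (auto simp: sd_weights_def)
  next
    case False
    have finC: "finite C" using assms unfolding C_def by simp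
    have Cc: "C \<in> pchains P le" using False finC less.prems(3) unfolding C_def pchains_def by auto
    define m where "m = Min (s ` C)"
    have "m \<in> s ` C" unfolding m_def using finC False by simp
    then obtain p1 where p1: "p1 \<in> C" "s p1 = m" by auto
    have m: "0 < m" "\<And>p. p \<in> C \<Longrightarrow> m \<le> s p"
      using p1 finC unfolding m_def C_def by auto
    define s' where "s' = (\<lambda>p. if p \<in> C then s p - m else s p)"
    have s'_pos: "0 < s' p \<Longrightarrow> p \<in> C" for p
      using less.prems(1,2) unfolding s'_def C_def by (auto split: if_splits)
    have "s' p1 = 0" using p1 unfolding s'_def by simp
    then have "{p \<in> P. 0 < s' p} \<subset> C"
      using s'_pos p1(1) by fastforce
    then have "card {p \<in> P. 0 < s' p} < card {p \<in> P. 0 < s p}"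
      unfolding C_def[symmetric] by (rule psubset_card_mono[OF finC])
    moreover have "\<forall>p. 0 \<le> s' p" "\<forall>p. p \<notin> P \<longrightarrow> s' p = 0"
      "\<forall>p q. 0 < s' p \<longrightarrow> 0 < s' q \<longrightarrow> le p q \<or> le q p"
      using less.prems m s'_pos unfolding s'_def C_def by auto
    ultimately have "\<exists>u'. sd_weights P le u' \<and> bary P le u' = s'"
      by (rule less.hyps)
    then obtain u' where u': "sd_weights P le u'" "bary P le u' = s'" by blast
    have "\<not> 0 < bary P le u' p1" "\<And>p. 0 < bary P le u' p \<Longrightarrow> p \<in> C"
      using u'(2) \<open>s' p1 = 0\<close> s'_pos by simp_all
    note upd = bary_fun_upd_top[OF assms u'(1) Cc p1(1) this, of "m * real (card C)"]
    have "bary P le (u'(C := m * real (card C))) = s"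
      using upd(2) m(1) u'(2) card_pchains_pos[OF Cc] by (auto simp: fun_eq_iff s'_def)
    moreover have "sd_weights P le (u'(C := m * real (card C)))"
      using upd(1) m(1) by simp
    ultimately show ?thesis by blast
  qed
qed

lemma bary_image:
  assumes "finite P"
  shows "bary P le ` realization (pchains P le) (\<subseteq>) = realization P le"
proof
  show "realization P le \<subseteq> bary P le ` realization (pchains P le) (\<subseteq>)"
  proof
    fix s assume s: "s \<in> realization P le"
    obtain u where u: "sd_weights P le u" "bary P le u = s"
      using bary_surj[OF assms, of s le] realizationD[OF s] by blast
    have "sum u (pchains P le) = 1"
      using sum_bary[OF assms, of le u] u realizationD(3)[OF s] sd_weightsD(2) by metis
    then show "s \<in> bary P le ` realization (pchains P le) (\<subseteq>)"
      using u by (auto simp: realization_sd_iff)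
  qed
qed (use bary_in_realization[OF assms] in blast)

lemma inj_on_bary: "finite P \<Longrightarrow> inj_on (bary P le) (realization (pchains P le) (\<subseteq>))"
  using bary_eq_imp_sd_weights_eq by (force simp: inj_on_def realization_sd_iff)

lemma homeomorphic_map_bary:
  assumes "finite P"
  shows "homeomorphic_map (top_of_set (realization (pchains P le) (\<subseteq>))) (top_of_set (realization P le))
           (bary P le)"
proof -
  have cont: "continuous_map (top_of_set (realization (pchains P le) (\<subseteq>))) (top_of_set (realization P le))
      (bary P le)"
    unfolding continuous_map_in_fun_set_iff
  proof (intro conjI allI ballI)
    fix p
    have comp: "continuous_map (top_of_set (realization (pchains P le) (\<subseteq>))) euclideanreal (\<lambda>u. u c)"
      for c
      by (rule continuous_map_fun_component[of _ UNIV]) (simp add: continuous_map_from_subtopology)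
    show "continuous_map (top_of_set (realization (pchains P le) (\<subseteq>))) euclideanreal
        (\<lambda>u. bary P le u p)"
      unfolding bary_def divide_inverse
      by (intro continuous_map_sum continuous_map_real_mult_right comp) (simp add: finite_pchains[OF assms])
  qed (use bary_in_realization[OF assms] in auto)
  have "compact_space (top_of_set (realization (pchains P le) (\<subseteq>)))"
    using compact_realization[OF finite_pchains[OF assms]] by (simp add: compact_space_subtopology)
  then have "closed_map (top_of_set (realization (pchains P le) (\<subseteq>))) (top_of_set (realization P le))
      (bary P le)"
    using continuous_imp_closed_map_gen[OF _ Hausdorff_imp_kc_space[OF Hausdorff_space_fun_set] cont]
    by blast
  then show ?thesis
    by (rule bijective_closed_imp_homeomorphic_map[OF cont])
       (use bary_image[OF assms] inj_on_bary[OF assms] in auto)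
qed

definition bary_inv :: "'b set \<Rightarrow> ('b \<Rightarrow> 'b \<Rightarrow> bool) \<Rightarrow> ('b \<Rightarrow> real) \<Rightarrow> ('b set \<Rightarrow> real)" where
  "bary_inv P le = inv_into (realization (pchains P le) (\<subseteq>)) (bary P le)"

lemma bary_inv:
  assumes "finite P" "s \<in> realization P le"
  shows bary_inv_in_realization: "bary_inv P le s \<in> realization (pchains P le) (\<subseteq>)"
    and bary_bary_inv: "bary P le (bary_inv P le s) = s"
  unfolding bary_inv_def using bary_image[OF assms(1), of le] assms(2)
  by (metis inv_into_into, metis f_inv_into_f)

lemma bary_inv_bary:
  "finite P \<Longrightarrow> u \<in> realization (pchains P le) (\<subseteq>) \<Longrightarrow> bary_inv P le (bary P le u) = u"
  unfolding bary_inv_def by (rule inv_into_f_f[OF inj_on_bary])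

lemma continuous_map_bary_inv:
  assumes "finite P"
  shows "continuous_map (top_of_set (realization P le)) (top_of_set (realization (pchains P le) (\<subseteq>)))
           (bary_inv P le)"
proof -
  obtain g where g: "homeomorphic_maps (top_of_set (realization (pchains P le) (\<subseteq>)))
      (top_of_set (realization P le)) (bary P le) g"
    using homeomorphic_map_bary[OF assms] homeomorphic_map_maps by blast
  show ?thesis
  proof (rule continuous_map_eq)
    show "continuous_map (top_of_set (realization P le)) (top_of_set (realization (pchains P le) (\<subseteq>))) g"
      using g by (simp add: homeomorphic_maps_def)
    fix s assume "s \<in> topspace (top_of_set (realization P le))"
    then have "g s \<in> realization (pchains P le) (\<subseteq>)" "bary P le (g s) = s"
      using g unfolding homeomorphic_maps_def by (auto dest: continuous_map_image_subset_topspace)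
    then show "g s = bary_inv P le s" using bary_inv_bary[OF assms] by metis
  qed
qed

section \<open>Homotopies between realized maps\<close>

lemma convex_comb_in_realization:
  assumes a: "a \<in> realization Q le" and b: "b \<in> realization Q le" and s: "0 \<le> s" "s \<le> 1"
    and chain: "\<And>q q'. 0 < a q \<or> 0 < b q \<Longrightarrow> 0 < a q' \<or> 0 < b q' \<Longrightarrow> le q q' \<or> le q' q"
  shows "(\<lambda>q. (1 - s) * a q + s * b q) \<in> realization Q le"
proof -
  have nonneg: "0 \<le> a q" "0 \<le> b q" for q
    using realizationD(1)[OF a] realizationD(1)[OF b] by auto
  then have "0 < a q \<or> 0 < b q" if "0 < (1 - s) * a q + s * b q" for q
    using that by (metis add.right_neutral mult_zero_right order_less_le)
  moreover have "sum (\<lambda>q. (1 - s) * a q + s * b q) Q = (1 - s) * sum a Q + s * sum b Q"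
    by (simp add: sum.distrib sum_distrib_left)
  ultimately show ?thesis
    using nonneg s chain realizationD(2,3)[OF a] realizationD(2,3)[OF b]
    unfolding realization_def by auto
qed

lemma continuous_map_fst_real:
  "continuous_map (prod_topology (top_of_set (T :: real set)) X) euclideanreal fst"
  by (rule continuous_map_into_fulltopology[OF continuous_map_fst])

lemma continuous_map_snd_fun_component:
  assumes "continuous_map X (top_of_set S) (f :: 'x \<Rightarrow> 'c \<Rightarrow> real)"
  shows "continuous_map (prod_topology T X) euclideanreal (\<lambda>y. f (snd y) q)"
  using continuous_map_compose[OF continuous_map_snd continuous_map_fun_component[OF assms]]
  by (simp add: o_def)

lemma homotopic_with_convex_comb:
  assumes cf: "continuous_map X (top_of_set (realization Q le)) f"
    and cg: "continuous_map X (top_of_set (realization Q le)) g"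
    and chain: "\<And>x q q'. x \<in> topspace X \<Longrightarrow> 0 < f x q \<or> 0 < g x q \<Longrightarrow> 0 < f x q' \<or> 0 < g x q' \<Longrightarrow>
                  le q q' \<or> le q' q"
    and Pr: "\<And>s. s \<in> {0..1} \<Longrightarrow> Pr (\<lambda>x q. (1 - s) * f x q + s * g x q)"
  shows "homotopic_with Pr X (top_of_set (realization Q le)) f g"
  unfolding homotopic_with_def
proof (intro exI conjI allI ballI)
  let ?h = "\<lambda>y q. (1 - fst y) * f (snd y) q + fst y * g (snd y) q"
  show "continuous_map (prod_topology (top_of_set {0..1}) X) (top_of_set (realization Q le)) ?h"
    unfolding continuous_map_in_fun_set_iff
  proof (intro conjI allI ballI)
    fix q
    show "continuous_map (prod_topology (top_of_set {0..1}) X) euclideanreal (\<lambda>y. ?h y q)"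
      by (intro continuous_map_add continuous_map_real_mult continuous_map_diff
          continuous_map_fst_real continuous_map_snd_fun_component[OF cf]
          continuous_map_snd_fun_component[OF cg]) simp
  next
    fix y assume "y \<in> topspace (prod_topology (top_of_set {0..1::real}) X)"
    then have y: "fst y \<in> {0..1}" "snd y \<in> topspace X" by auto
    have "f (snd y) \<in> realization Q le" "g (snd y) \<in> realization Q le"
      using continuous_map_image_subset_topspace[OF cf] continuous_map_image_subset_topspace[OF cg] y(2)
      by auto
    then show "?h y \<in> realization Q le"
      by (rule convex_comb_in_realization) (use y chain in auto)
  qed
qed (use Pr in auto)

text \<open>For monotone \<open>f \<le> g\<close> the straight-line homotopy between \<open>|f|\<close> and \<open>|g|\<close> need not stay
  in \<open>|Q|\<close>. Instead, at time \<open>s\<close> the weight of \<open>t\<close> is moved from \<open>f\<close> to \<open>g\<close> top-down: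
  vertex \<open>p\<close> has moved as much of its weight as \<open>s\<close> exceeds the total weight strictly above
  \<open>p\<close>. So once any weight of \<open>p\<close> has moved, all vertices above \<open>p\<close> have moved completely,
  which keeps the support a chain.\<close>

definition weight_above :: "'b set \<Rightarrow> ('b \<Rightarrow> 'b \<Rightarrow> bool) \<Rightarrow> ('b \<Rightarrow> real) \<Rightarrow> 'b \<Rightarrow> real" where
  "weight_above P le t p = sum t {q \<in> P. q \<noteq> p \<and> le p q}"

definition swept_weight :: "'b set \<Rightarrow> ('b \<Rightarrow> 'b \<Rightarrow> bool) \<Rightarrow> real \<Rightarrow> ('b \<Rightarrow> real) \<Rightarrow> 'b \<Rightarrow> real" where
  "swept_weight P le s t p = min (t p) (max 0 (s - weight_above P le t p))"

definition sweep :: "'b set \<Rightarrow> ('b \<Rightarrow> 'b \<Rightarrow> bool) \<Rightarrow> ('b \<Rightarrow> 'c) \<Rightarrow> ('b \<Rightarrow> 'c) \<Rightarrow> real \<Rightarrow>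
    ('b \<Rightarrow> real) \<Rightarrow> ('c \<Rightarrow> real)" where
  "sweep P le f g s t = (\<lambda>r. realize_map P g (swept_weight P le s t) r +
     realize_map P f (\<lambda>p. t p - swept_weight P le s t p) r)"

lemma swept_weight_nonneg: "0 \<le> t p \<Longrightarrow> 0 \<le> swept_weight P le s t p"
  by (auto simp: swept_weight_def)

lemma swept_weight_le: "swept_weight P le s t p \<le> t p"
  by (auto simp: swept_weight_def)

lemma weight_above_nonneg: "(\<And>p. 0 \<le> t p) \<Longrightarrow> 0 \<le> weight_above P le t p"
  unfolding weight_above_def by (rule sum_nonneg) auto

lemma weight_above_less:
  assumes "finite P" "partial_orderp le" "\<And>q. 0 \<le> t q" "p' \<in> P" "le p p'" "p \<noteq> p'"
  shows "weight_above P le t p' + t p' \<le> weight_above P le t p"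
proof -
  have "insert p' {q \<in> P. q \<noteq> p' \<and> le p' q} \<subseteq> {q \<in> P. q \<noteq> p \<and> le p q}"
    using assms(4-6) partial_orderp_trans[OF assms(2) assms(5)] partial_orderp_antisym[OF assms(2) assms(5)]
    by auto
  then have "sum t (insert p' {q \<in> P. q \<noteq> p' \<and> le p' q}) \<le> sum t {q \<in> P. q \<noteq> p \<and> le p q}"
    by (intro sum_mono2) (use assms(1,3) in auto)
  then show ?thesis
    unfolding weight_above_def using assms(1) by (simp add: add.commute)
qed

lemma swept_weight_above:
  assumes "finite P" "partial_orderp le" "\<And>q. 0 \<le> t q" "p' \<in> P" "le p p'" "p \<noteq> p'"
    and "0 < swept_weight P le s t p"
  shows "swept_weight P le s t p' = t p'"
proof -
  have "0 < s - weight_above P le t p" using assms(7) by (auto simp: swept_weight_def)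
  moreover have "weight_above P le t p' + t p' \<le> weight_above P le t p"
    by (rule weight_above_less[OF assms(1-6)])
  ultimately show ?thesis using assms(3)[of p'] by (auto simp: swept_weight_def)
qed

lemma sweep_posE:
  assumes "finite P" "\<And>p. 0 \<le> t p" "0 < sweep P le f g s t r"
  obtains (moved) p where "p \<in> P" "g p = r" "0 < swept_weight P le s t p"
    | (unmoved) p where "p \<in> P" "f p = r" "0 < t p - swept_weight P le s t p"
proof -
  have a: "0 \<le> swept_weight P le s t p" and b: "0 \<le> t p - swept_weight P le s t p" for p
    using swept_weight_nonneg[of t p P le s] swept_weight_le[of P le s t p] assms(2)[of p] by linarith+
  have "0 < realize_map P g (swept_weight P le s t) r \<or>
      0 < realize_map P f (\<lambda>p. t p - swept_weight P le s t p) r"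
    using assms(3) realize_map_nonneg[of "swept_weight P le s t", OF a, of P g r]
      realize_map_nonneg[of "\<lambda>p. t p - swept_weight P le s t p", OF b, of P f r]
    unfolding sweep_def by linarith
  then show ?thesis
  proof
    assume pos: "0 < realize_map P g (swept_weight P le s t) r"
    obtain p where "p \<in> P" "g p = r" "0 < swept_weight P le s t p"
      using realize_map_posE[OF pos a assms(1)] .
    then show ?thesis by (rule that(1))
  next
    assume pos: "0 < realize_map P f (\<lambda>p. t p - swept_weight P le s t p) r"
    obtain p where "p \<in> P" "f p = r" "0 < t p - swept_weight P le s t p"
      using realize_map_posE[OF pos b assms(1)] .
    then show ?thesis by (rule that(2))
  qed
qed

text \<open>A vertex with weight still unmoved lies below every vertex whose weight has started to move.\<close>
lemma sweep_unmoved_le_moved: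
  assumes "finite P" "partial_orderp le" "partial_orderp le'" "monotone_on P le le' f"
    and fg: "\<And>p. p \<in> P \<Longrightarrow> le' (f p) (g p)" and t: "t \<in> realization P le"
    and p: "p \<in> P" "0 < swept_weight P le s t p"
    and p': "p' \<in> P" "0 < t p' - swept_weight P le s t p'"
  shows "le' (f p') (g p)"
proof (cases "p = p'")
  case False
  have tn: "\<And>q. 0 \<le> t q" using realizationD(1)[OF t] .
  have "\<not> le p p'"
    using swept_weight_above[OF assms(1,2) tn p'(1) _ False p(2)] p'(2) by auto
  moreover have "0 < t p" "0 < t p'"
    using swept_weight_le[of P le s t p] swept_weight_nonneg[of t p' P le s] tn[of p'] p(2) p'(2)
    by linarith+
  then have "le p p' \<or> le p' p" by (rule realizationD(4)[OF t])
  ultimately show ?thesis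
    using partial_orderp_trans[OF assms(3) monotone_onD[OF assms(4) p'(1) p(1)] fg[OF p(1)]] by simp
qed (use fg p in simp)

lemma sweep_support_chain:
  assumes "finite P" "partial_orderp le" "partial_orderp le'"
    and "monotone_on P le le' f" "monotone_on P le le' g"
    and fg: "\<And>p. p \<in> P \<Longrightarrow> le' (f p) (g p)" and t: "t \<in> realization P le"
    and r: "0 < sweep P le f g s t r" and r': "0 < sweep P le f g s t r'"
  shows "le' r r' \<or> le' r' r"
proof -
  have tn: "\<And>p. 0 \<le> t p" using realizationD(1)[OF t] .
  let ?a = "swept_weight P le s t"
  have pos: "0 < t p" if "0 < ?a p \<or> 0 < t p - ?a p" for p
    using swept_weight_le[of P le s t p] swept_weight_nonneg[of t p P le s] tn[of p] that by linarith
  have same: "le' (f p) (f p') \<or> le' (f p') (f p)" "le' (g p) (g p') \<or> le' (g p') (g p)"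
    if "p \<in> P" "p' \<in> P" "0 < t p" "0 < t p'" for p p'
    using realizationD(4)[OF t that(3,4)] monotone_onD[OF assms(4) that(1,2)]
      monotone_onD[OF assms(4) that(2,1)] monotone_onD[OF assms(5) that(1,2)]
      monotone_onD[OF assms(5) that(2,1)] by blast+
  show ?thesis
  proof (cases rule: sweep_posE[OF assms(1) tn r, case_names moved unmoved])
    case (moved p)
    show ?thesis
    proof (cases rule: sweep_posE[OF assms(1) tn r', case_names moved' unmoved'])
      case (moved' p')
      then show ?thesis using same(2)[OF moved(1) moved'(1)] pos moved by auto
    next
      case (unmoved' p')
      then show ?thesis using sweep_unmoved_le_moved[OF assms(1-4) fg t moved(1,3) unmoved'(1,3)] moved(2) by auto
    qed
  next
    case (unmoved p)
    show ?thesis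
    proof (cases rule: sweep_posE[OF assms(1) tn r', case_names moved' unmoved'])
      case (moved' p')
      then show ?thesis using sweep_unmoved_le_moved[OF assms(1-4) fg t moved'(1,3) unmoved(1,3)] unmoved(2) by auto
    next
      case (unmoved' p')
      then show ?thesis using same(1)[OF unmoved(1) unmoved'(1)] pos unmoved by auto
    qed
  qed
qed

lemma sweep_in_realization:
  assumes "finite P" "finite Q" "partial_orderp le" "partial_orderp le'"
    and "f ` P \<subseteq> Q" "g ` P \<subseteq> Q" "monotone_on P le le' f" "monotone_on P le le' g"
    and "\<And>p. p \<in> P \<Longrightarrow> le' (f p) (g p)"
    and t: "t \<in> realization P le"
  shows "sweep P le f g s t \<in> realization Q le'"
proof -
  have tn: "\<And>p. 0 \<le> t p" using realizationD(1)[OF t] .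
  have "sweep P le f g s t r = 0" if "r \<notin> Q" for r
  proof -
    have e: "{p \<in> P. g p = r} = {}" "{p \<in> P. f p = r} = {}" using that assms(5,6) by auto
    show ?thesis unfolding sweep_def realize_map_def e by simp
  qed
  moreover have "sum (sweep P le f g s t) Q = 1"
    using realizationD(3)[OF t]
    by (simp add: sweep_def sum.distrib sum_realize_map[OF assms(1,2,6)]
        sum_realize_map[OF assms(1,2,5)] sum_subtractf)
  moreover have "0 \<le> sweep P le f g s t r" for r
    unfolding sweep_def
  proof (intro add_nonneg_nonneg realize_map_nonneg)
    show "0 \<le> swept_weight P le s t p" "0 \<le> t p - swept_weight P le s t p" for p
      using swept_weight_le[of P le s t p] swept_weight_nonneg[of t p P le s] tn[of p] by linarith+
  qed
  moreover have "le' r r' \<or> le' r' r"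
    if "0 < sweep P le f g s t r" "0 < sweep P le f g s t r'" for r r'
    by (rule sweep_support_chain[OF assms(1,3,4,7-10) that])
  ultimately show ?thesis by (auto simp: realization_def)
qed

lemma sweep_0:
  assumes "t \<in> realization P le"
  shows "sweep P le f g 0 t = realize_map P f t"
proof -
  have "swept_weight P le 0 t p = 0" for p
    using realizationD(1)[OF assms] weight_above_nonneg[of t P le p] by (simp add: swept_weight_def)
  then show ?thesis unfolding sweep_def by (simp add: realize_map_def)
qed

lemma sweep_1:
  assumes "finite P" "t \<in> realization P le"
  shows "sweep P le f g 1 t = realize_map P g t"
proof -
  have tn: "\<And>p. 0 \<le> t p" using realizationD(1)[OF assms(2)] .
  have full: "swept_weight P le 1 t p = t p" if "p \<in> P" for p
  proof -
    have "weight_above P le t p + t p = sum t (insert p {q \<in> P. q \<noteq> p \<and> le p q})"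
      unfolding weight_above_def using assms(1) by (simp add: add.commute)
    also have "\<dots> \<le> sum t P" by (rule sum_mono2) (use assms(1) that tn in auto)
    finally show ?thesis
      using realizationD(3)[OF assms(2)] tn[of p] by (simp add: swept_weight_def)
  qed
  have "realize_map P f (\<lambda>p. t p - swept_weight P le 1 t p) = realize_map P f (\<lambda>_. 0)"
    by (rule realize_map_cong) (simp_all add: full)
  moreover have "realize_map P g (swept_weight P le 1 t) = realize_map P g t"
    by (rule realize_map_cong) (simp_all add: full)
  ultimately show ?thesis unfolding sweep_def by (simp add: realize_map_def)
qed

lemma continuous_map_sweep:
  assumes "finite P"
  shows "continuous_map (prod_topology (top_of_set {0..1}) (top_of_set (realization P le))) euclidean
           (\<lambda>y. sweep P le f g (fst y) (snd y))"
  unfolding continuous_map_fun_iff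
proof
  fix r
  have idc: "continuous_map (top_of_set (realization P le)) (top_of_set (realization P le)) id"
    by simp
  have "continuous_map (prod_topology (top_of_set {0..1}) (top_of_set (realization P le)))
      euclideanreal (\<lambda>y. snd y p)" for p
    using continuous_map_snd_fun_component[OF idc] unfolding id_def .
  then show "continuous_map (prod_topology (top_of_set {0..1}) (top_of_set (realization P le)))
      euclideanreal (\<lambda>y. sweep P le f g (fst y) (snd y) r)"
    unfolding sweep_def realize_map_def swept_weight_def weight_above_def
    by (intro continuous_map_add continuous_map_sum continuous_map_real_min continuous_map_real_max
        continuous_map_diff continuous_map_const[THEN iffD2] continuous_map_fst_real)
       (simp_all add: assms)
qed

lemma homotopic_with_sweep:
  assumes "finite P" "finite Q" "partial_orderp le" "partial_orderp le'"
    and "f ` P \<subseteq> Q" "g ` P \<subseteq> Q" "monotone_on P le le' f" "monotone_on P le le' g"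
    and "\<And>p. p \<in> P \<Longrightarrow> le' (f p) (g p)"
    and Pr_cong: "\<And>h k. (\<And>t. t \<in> realization P le \<Longrightarrow> h t = k t) \<Longrightarrow> Pr h \<longleftrightarrow> Pr k"
    and Pr: "\<And>s. s \<in> {0..1} \<Longrightarrow> Pr (sweep P le f g s)"
  shows "homotopic_with Pr (top_of_set (realization P le)) (top_of_set (realization Q le'))
           (realize_map P f) (realize_map P g)"
proof -
  have cong: "Pr h \<longleftrightarrow> Pr k"
    if "\<And>t. t \<in> topspace (top_of_set (realization P le)) \<Longrightarrow> h t = k t" for h k
    by (rule Pr_cong) (use that in simp)
  let ?H = "\<lambda>y. sweep P le f g (fst y) (snd y)"
  have "continuous_map (prod_topology (top_of_set {0..1}) (top_of_set (realization P le)))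
      (top_of_set (realization Q le')) ?H"
    unfolding continuous_map_in_subtopology
  proof
    show "?H \<in> topspace (prod_topology (top_of_set {0..1}) (top_of_set (realization P le)))
        \<rightarrow> realization Q le'"
      using sweep_in_realization[OF assms(1-9)] by auto
  qed (rule continuous_map_sweep[OF assms(1)])
  moreover have "\<forall>t\<in>topspace (top_of_set (realization P le)). ?H (0, t) = realize_map P f t"
    "\<forall>t\<in>topspace (top_of_set (realization P le)). ?H (1, t) = realize_map P g t"
    using sweep_0[of _ P le f g] sweep_1[OF assms(1), of _ le f g] by simp_all
  moreover have "\<forall>s\<in>{0..1}. Pr (\<lambda>t. ?H (s, t))"
    using Pr by simp
  ultimately show ?thesis
    using homotopic_with[where P=Pr and X="top_of_set (realization P le)", OF cong] by blast
qed

subsection \<open>Automorphisms and equivariance\<close>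

definition poset_aut :: "'b set \<Rightarrow> ('b \<Rightarrow> 'b \<Rightarrow> bool) \<Rightarrow> ('b \<Rightarrow> 'b) \<Rightarrow> ('b \<Rightarrow> 'b) \<Rightarrow> bool" where
  "poset_aut P le \<alpha> \<beta> \<longleftrightarrow> (\<forall>p\<in>P. \<alpha> p \<in> P \<and> \<beta> p \<in> P \<and> \<beta> (\<alpha> p) = p \<and> \<alpha> (\<beta> p) = p) \<and>
      (\<forall>p\<in>P. \<forall>q\<in>P. le (\<alpha> p) (\<alpha> q) \<longleftrightarrow> le p q)"

lemma poset_autD:
  assumes "poset_aut P le \<alpha> \<beta>" "p \<in> P"
  shows "\<alpha> p \<in> P" "\<beta> p \<in> P" "\<beta> (\<alpha> p) = p" "\<alpha> (\<beta> p) = p"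
  using assms unfolding poset_aut_def by auto

lemma poset_aut_le_iff:
  "poset_aut P le \<alpha> \<beta> \<Longrightarrow> p \<in> P \<Longrightarrow> q \<in> P \<Longrightarrow> le (\<alpha> p) (\<alpha> q) \<longleftrightarrow> le p q"
  unfolding poset_aut_def by auto

lemma poset_aut_inverse:
  assumes "poset_aut P le \<alpha> \<beta>"
  shows "poset_aut P le \<beta> \<alpha>"
proof -
  have "le (\<beta> p) (\<beta> q) \<longleftrightarrow> le p q" if "p \<in> P" "q \<in> P" for p q
    using poset_aut_le_iff[OF assms poset_autD(2)[OF assms that(1)] poset_autD(2)[OF assms that(2)]]
      poset_autD(4)[OF assms that(1)] poset_autD(4)[OF assms that(2)] by simp
  then show ?thesis using poset_autD[OF assms] unfolding poset_aut_def by auto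
qed

lemma image_in_pchains_aut:
  assumes a: "poset_aut P le \<alpha> \<beta>" and c: "c \<in> pchains P le"
  shows "\<alpha> ` c \<in> pchains P le"
proof -
  have "le x y \<or> le y x" if xy: "x \<in> \<alpha> ` c" "y \<in> \<alpha> ` c" for x y
  proof -
    obtain p q where pq: "p \<in> c" "q \<in> c" "x = \<alpha> p" "y = \<alpha> q" using xy by blast
    then have "p \<in> P" "q \<in> P" using pchainsD(1)[OF c] by auto
    then show ?thesis
      using pchainsD(4)[OF c pq(1,2)] pq(3,4) poset_aut_le_iff[OF a] by simp
  qed
  moreover have "\<alpha> ` c \<subseteq> P" using poset_autD(1)[OF a] pchainsD(1)[OF c] by blast
  ultimately show ?thesis using pchainsD(2,3)[OF c] unfolding pchains_def by auto
qed

lemma image_image_aut: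
  assumes a: "poset_aut P le \<alpha> \<beta>" and "c \<subseteq> P"
  shows "\<beta> ` \<alpha> ` c = c"
proof -
  have "\<beta> ` \<alpha> ` c = (\<lambda>p. \<beta> (\<alpha> p)) ` c" by (simp add: image_image)
  also have "\<dots> = (\<lambda>p. p) ` c"
    using poset_autD(3)[OF a] assms(2) by (intro image_cong) auto
  finally show ?thesis by simp
qed

lemma poset_aut_pchains:
  assumes a: "poset_aut P le \<alpha> \<beta>"
  shows "poset_aut (pchains P le) (\<subseteq>) ((`) \<alpha>) ((`) \<beta>)"
  unfolding poset_aut_def
proof (intro conjI ballI)
  fix c assume c: "c \<in> pchains P le"
  note a_inv = poset_aut_inverse[OF a]
  show "\<alpha> ` c \<in> pchains P le" "\<beta> ` c \<in> pchains P le"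
    using image_in_pchains_aut[OF a c] image_in_pchains_aut[OF a_inv c] .
  show "\<beta> ` \<alpha> ` c = c" "\<alpha> ` \<beta> ` c = c"
    using image_image_aut[OF a pchainsD(1)[OF c]] image_image_aut[OF a_inv pchainsD(1)[OF c]] .
next
  fix c c' assume c: "c \<in> pchains P le" and c': "c' \<in> pchains P le"
  show "\<alpha> ` c \<subseteq> \<alpha> ` c' \<longleftrightarrow> c \<subseteq> c'"
  proof
    assume "\<alpha> ` c \<subseteq> \<alpha> ` c'"
    then have "\<beta> ` \<alpha> ` c \<subseteq> \<beta> ` \<alpha> ` c'" by (rule image_mono)
    then show "c \<subseteq> c'" using image_image_aut[OF a pchainsD(1)[OF c]] image_image_aut[OF a pchainsD(1)[OF c']]
      by simp
  qed (rule image_mono)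
qed

lemma realize_map_aut:
  assumes "poset_aut P le \<alpha> \<beta>"
  shows "realize_map P \<alpha> t = (\<lambda>p. if p \<in> P then t (\<beta> p) else 0)"
proof
  fix p
  show "realize_map P \<alpha> t p = (if p \<in> P then t (\<beta> p) else 0)"
  proof (cases "p \<in> P")
    case True
    then have "{p0 \<in> P. \<alpha> p0 = p} = {\<beta> p}"
      using poset_autD[OF assms True] poset_autD(3)[OF assms] by auto
    then show ?thesis using True by (simp add: realize_map_def)
  next
    case False
    then have e: "{p0 \<in> P. \<alpha> p0 = p} = {}" using poset_autD(1)[OF assms] by auto
    show ?thesis using False unfolding realize_map_def e by simp
  qed
qed

lemma realize_map_aut_weights:
  assumes a: "poset_aut P le \<alpha> \<beta>" and "\<And>p. p \<in> P \<Longrightarrow> u p = t (\<beta> p)"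
  shows "realize_map P f u = realize_map P (f \<circ> \<alpha>) t"
proof
  fix r
  have bij: "bij_betw \<alpha> {p \<in> P. f (\<alpha> p) = r} {p \<in> P. f p = r}"
    by (rule bij_betw_byWitness[where f'=\<beta>]) (use poset_autD[OF a] in auto)
  have "realize_map P (f \<circ> \<alpha>) t r = (\<Sum>p\<in>{p \<in> P. f (\<alpha> p) = r}. u (\<alpha> p))"
    unfolding realize_map_def by (rule sum.cong) (use poset_autD[OF a] assms(2) in auto)
  also have "\<dots> = realize_map P f u r"
    unfolding realize_map_def by (rule sum.reindex_bij_betw[OF bij])
  finally show "realize_map P f u r = realize_map P (f \<circ> \<alpha>) t r" ..
qed

lemma realize_map_aut_in_realization:
  assumes "finite P" "poset_aut P le \<alpha> \<beta>" "t \<in> realization P le"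
  shows "realize_map P \<alpha> t \<in> realization P le"
proof (rule realize_map_in_realization[OF assms(1,1) _ _ assms(3)])
  show "\<alpha> ` P \<subseteq> P" using poset_autD(1)[OF assms(2)] by blast
  show "monotone_on P le le \<alpha>" using poset_aut_le_iff[OF assms(2)] by (auto intro!: monotone_onI)
qed

lemma bary_realize_map_aut:
  assumes "finite P" and a: "poset_aut P le \<alpha> \<beta>"
  shows "bary P le (realize_map (pchains P le) ((`) \<alpha>) u) = realize_map P \<alpha> (bary P le u)"
proof
  fix p
  note a' = poset_aut_pchains[OF a]
  show "bary P le (realize_map (pchains P le) ((`) \<alpha>) u) p = realize_map P \<alpha> (bary P le u) p"
  proof (cases "p \<in> P")
    case False
    then have e: "{c \<in> pchains P le. p \<in> c} = {}" using pchainsD(1) by blast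
    show ?thesis unfolding realize_map_aut[OF a] bary_def e using False by simp
  next
    case True
    let ?S = "{c \<in> pchains P le. \<beta> p \<in> c}" and ?T = "{c \<in> pchains P le. p \<in> c}"
    have bij: "bij_betw ((`) \<alpha>) ?S ?T"
    proof (rule bij_betw_byWitness[where f'="(`) \<beta>"])
      show "\<forall>c\<in>?S. \<beta> ` \<alpha> ` c = c" using poset_autD(3)[OF a'] by auto
      show "\<forall>c\<in>?T. \<alpha> ` \<beta> ` c = c" using poset_autD(4)[OF a'] by auto
      show "(`) \<alpha> ` ?S \<subseteq> ?T" using poset_autD(1)[OF a'] poset_autD(4)[OF a True] by force
      show "(`) \<beta> ` ?T \<subseteq> ?S" using poset_autD(2)[OF a'] by force
    qed
    have card: "card (\<alpha> ` c) = card c" if "c \<in> pchains P le" for c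
    proof (rule card_image, rule inj_on_inverseI)
      show "\<beta> (\<alpha> p) = p" if "p \<in> c" for p
        using poset_autD(3)[OF a] pchainsD(1)[OF \<open>c \<in> pchains P le\<close>] that by blast
    qed
    have "bary P le (realize_map (pchains P le) ((`) \<alpha>) u) p = (\<Sum>c\<in>?T. u (\<beta> ` c) / real (card c))"
      unfolding bary_def realize_map_aut[OF a'] by (rule sum.cong) auto
    also have "\<dots> = (\<Sum>c\<in>?S. u (\<beta> ` \<alpha> ` c) / real (card (\<alpha> ` c)))"
      by (rule sum.reindex_bij_betw[OF bij, symmetric])
    also have "\<dots> = (\<Sum>c\<in>?S. u c / real (card c))"
      by (rule sum.cong) (use poset_autD(3)[OF a'] card in auto)
    also have "\<dots> = realize_map P \<alpha> (bary P le u) p"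
      unfolding realize_map_aut[OF a] bary_def using True by simp
    finally show ?thesis .
  qed
qed

lemma bary_inv_realize_map_aut:
  assumes "finite P" and a: "poset_aut P le \<alpha> \<beta>" and s: "s \<in> realization P le"
  shows "bary_inv P le (realize_map P \<alpha> s) = realize_map (pchains P le) ((`) \<alpha>) (bary_inv P le s)"
proof -
  have "realize_map (pchains P le) ((`) \<alpha>) (bary_inv P le s) \<in> realization (pchains P le) (\<subseteq>)"
    by (rule realize_map_aut_in_realization[OF finite_pchains[OF assms(1)] poset_aut_pchains[OF a]
          bary_inv_in_realization[OF assms(1) s]])
  moreover have "bary P le (realize_map (pchains P le) ((`) \<alpha>) (bary_inv P le s)) = realize_map P \<alpha> s"
    using bary_realize_map_aut[OF assms(1) a] bary_bary_inv[OF assms(1) s] by simp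
  ultimately show ?thesis using bary_inv_bary[OF assms(1)] by force
qed

lemma weight_above_realize_map_aut:
  assumes a: "poset_aut P le \<alpha> \<beta>" and p: "p \<in> P"
  shows "weight_above P le (realize_map P \<alpha> t) p = weight_above P le t (\<beta> p)"
proof -
  have le_iff: "le (\<beta> p) q \<longleftrightarrow> le p (\<alpha> q)" if "q \<in> P" for q
    using poset_aut_le_iff[OF a poset_autD(2)[OF a p] that] poset_autD(4)[OF a p] by simp
  have bij: "bij_betw \<alpha> {q \<in> P. q \<noteq> \<beta> p \<and> le (\<beta> p) q} {q \<in> P. q \<noteq> p \<and> le p q}"
  proof (rule bij_betw_byWitness[where f'=\<beta>])
    show "\<alpha> ` {q \<in> P. q \<noteq> \<beta> p \<and> le (\<beta> p) q} \<subseteq> {q \<in> P. q \<noteq> p \<and> le p q}"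
      using poset_autD[OF a] poset_autD(4)[OF a p] le_iff by auto
    show "\<beta> ` {q \<in> P. q \<noteq> p \<and> le p q} \<subseteq> {q \<in> P. q \<noteq> \<beta> p \<and> le (\<beta> p) q}"
    proof clarify
      fix q assume q: "q \<in> P" "q \<noteq> p" "le p q"
      have "\<beta> q \<noteq> \<beta> p" using q(2) poset_autD(4)[OF a q(1)] poset_autD(4)[OF a p] by metis
      then show "\<beta> q \<in> P \<and> \<beta> q \<noteq> \<beta> p \<and> le (\<beta> p) (\<beta> q)"
        using poset_autD(2)[OF a q(1)] le_iff[OF poset_autD(2)[OF a q(1)]] poset_autD(4)[OF a q(1)] q(3)
        by simp
    qed
  qed (use poset_autD[OF a] in auto)
  have "weight_above P le (realize_map P \<alpha> t) p = (\<Sum>q\<in>{q \<in> P. q \<noteq> p \<and> le p q}. t (\<beta> q))"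
    unfolding weight_above_def realize_map_aut[OF a] by (rule sum.cong) auto
  also have "\<dots> = (\<Sum>q\<in>{q \<in> P. q \<noteq> \<beta> p \<and> le (\<beta> p) q}. t (\<beta> (\<alpha> q)))"
    by (rule sum.reindex_bij_betw[OF bij, symmetric])
  also have "\<dots> = weight_above P le t (\<beta> p)"
    unfolding weight_above_def by (rule sum.cong) (use poset_autD(3)[OF a] in auto)
  finally show ?thesis .
qed

lemma sweep_realize_map_aut:
  assumes "finite P" "finite Q" and a: "poset_aut P le \<alpha> \<beta>"
    and "f ` P \<subseteq> Q" "g ` P \<subseteq> Q"
    and "\<And>p. p \<in> P \<Longrightarrow> f (\<alpha> p) = \<gamma> (f p)" "\<And>p. p \<in> P \<Longrightarrow> g (\<alpha> p) = \<gamma> (g p)"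
  shows "sweep P le f g s (realize_map P \<alpha> t) = realize_map Q \<gamma> (sweep P le f g s t)"
proof -
  let ?t' = "realize_map P \<alpha> t"
  have t': "?t' p = t (\<beta> p)" if "p \<in> P" for p
    using that by (simp add: realize_map_aut[OF a])
  have swept: "swept_weight P le s ?t' p = swept_weight P le s t (\<beta> p)" if "p \<in> P" for p
    using weight_above_realize_map_aut[OF a that] t'[OF that] by (simp add: swept_weight_def)
  have "sweep P le f g s ?t' = (\<lambda>r. realize_map P (g \<circ> \<alpha>) (swept_weight P le s t) r +
      realize_map P (f \<circ> \<alpha>) (\<lambda>p. t p - swept_weight P le s t p) r)"
    unfolding sweep_def
    using realize_map_aut_weights[OF a, of "swept_weight P le s ?t'" "swept_weight P le s t" g]
      realize_map_aut_weights[OF a, of "\<lambda>p. ?t' p - swept_weight P le s ?t' p"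
        "\<lambda>p. t p - swept_weight P le s t p" f] swept t'
    by simp
  also have "\<dots> = (\<lambda>r. realize_map P (\<gamma> \<circ> g) (swept_weight P le s t) r +
      realize_map P (\<gamma> \<circ> f) (\<lambda>p. t p - swept_weight P le s t p) r)"
    using realize_map_cong[of P "g \<circ> \<alpha>" "\<gamma> \<circ> g"] realize_map_cong[of P "f \<circ> \<alpha>" "\<gamma> \<circ> f"] assms(6,7)
    by simp
  also have "\<dots> = realize_map Q \<gamma> (sweep P le f g s t)"
    unfolding sweep_def realize_map_add
    by (simp only: realize_map_comp[OF assms(1,2,5)] realize_map_comp[OF assms(1,2,4)])
  finally show ?thesis .
qed

lemma chain_max_image_aut:
  assumes "partial_orderp le" "poset_aut P le \<alpha> \<beta>" "c \<in> pchains P le"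
  shows "chain_max le (\<alpha> ` c) = \<alpha> (chain_max le c)"
proof (rule chain_max_eq[OF assms(1)])
  have m: "chain_max le c \<in> P" using chain_max_mem[OF assms(1,3)] pchainsD(1)[OF assms(3)] by blast
  show "\<alpha> (chain_max le c) \<in> \<alpha> ` c" using chain_max_mem[OF assms(1,3)] by blast
  show "\<forall>p\<in>\<alpha> ` c. le p (\<alpha> (chain_max le c))"
  proof
    fix p assume "p \<in> \<alpha> ` c"
    then obtain q where q: "q \<in> c" "p = \<alpha> q" by blast
    then have "q \<in> P" using pchainsD(1)[OF assms(3)] by blast
    then show "le p (\<alpha> (chain_max le c))"
      using chain_max_ge[OF assms(1,3) q(1)] poset_aut_le_iff[OF assms(2) _ m] q(2) by simp
  qed
qed

lemma chain_min_image_aut: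
  assumes "partial_orderp le" "poset_aut P le \<alpha> \<beta>" "c \<in> pchains P le"
  shows "chain_min le (\<alpha> ` c) = \<alpha> (chain_min le c)"
proof (rule chain_min_eq[OF assms(1)])
  have m: "chain_min le c \<in> P" using chain_min_mem[OF assms(1,3)] pchainsD(1)[OF assms(3)] by blast
  show "\<alpha> (chain_min le c) \<in> \<alpha> ` c" using chain_min_mem[OF assms(1,3)] by blast
  show "\<forall>p\<in>\<alpha> ` c. le (\<alpha> (chain_min le c)) p"
  proof
    fix p assume "p \<in> \<alpha> ` c"
    then obtain q where q: "q \<in> c" "p = \<alpha> q" by blast
    then have "q \<in> P" using pchainsD(1)[OF assms(3)] by blast
    then show "le (\<alpha> (chain_min le c)) p"
      using chain_min_le[OF assms(1,3) q(1)] poset_aut_le_iff[OF assms(2) m] q(2) by simp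
  qed
qed

definition equivariant_on ::
    "'g set \<Rightarrow> 'x set \<Rightarrow> ('g \<Rightarrow> 'x \<Rightarrow> 'x) \<Rightarrow> ('g \<Rightarrow> 'y \<Rightarrow> 'y) \<Rightarrow> ('x \<Rightarrow> 'y) \<Rightarrow> bool" where
  "equivariant_on G S \<alpha> \<beta> k \<longleftrightarrow> (\<forall>g\<in>G. \<forall>x\<in>S. k (\<alpha> g x) = \<beta> g (k x))"

lemma equivariant_on_comp:
  assumes "equivariant_on G S \<alpha> \<beta> f" "equivariant_on G T \<beta> \<gamma> h" "f ` S \<subseteq> T"
  shows "equivariant_on G S \<alpha> \<gamma> (h \<circ> f)"
  using assms unfolding equivariant_on_def by (auto simp: image_subset_iff)

lemma equivariant_on_cong:
  assumes "\<And>g. g \<in> G \<Longrightarrow> \<alpha> g ` S \<subseteq> S" "\<And>x. x \<in> S \<Longrightarrow> h x = k x"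
  shows "equivariant_on G S \<alpha> \<beta> h \<longleftrightarrow> equivariant_on G S \<alpha> \<beta> k"
  using assms unfolding equivariant_on_def by (simp add: image_subset_iff)

lemma equivariant_on_convex_comb:
  assumes "equivariant_on G S \<alpha> (\<lambda>g. realize_map Q (\<gamma> g)) f"
    and "equivariant_on G S \<alpha> (\<lambda>g. realize_map Q (\<gamma> g)) h"
  shows "equivariant_on G S \<alpha> (\<lambda>g. realize_map Q (\<gamma> g)) (\<lambda>x q. (1 - s) * f x q + s * h x q)"
  using assms by (simp add: equivariant_on_def realize_map_lincomb)

lemma equivariant_on_realize_map:
  assumes "finite P" "finite Q" "f ` P \<subseteq> Q" "\<And>g. g \<in> G \<Longrightarrow> \<alpha> g ` P \<subseteq> P"
    and "\<And>g p. g \<in> G \<Longrightarrow> p \<in> P \<Longrightarrow> f (\<alpha> g p) = \<gamma> g (f p)"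
  shows "equivariant_on G S (\<lambda>g. realize_map P (\<alpha> g)) (\<lambda>g. realize_map Q (\<gamma> g)) (realize_map P f)"
  unfolding equivariant_on_def
proof (intro ballI)
  fix g t assume g: "g \<in> G"
  have "realize_map P f (realize_map P (\<alpha> g) t) = realize_map P (f \<circ> \<alpha> g) t"
    by (rule realize_map_comp[OF assms(1) assms(1) assms(4)[OF g]])
  also have "\<dots> = realize_map P (\<gamma> g \<circ> f) t"
    by (rule realize_map_cong) (simp_all add: assms(5)[OF g])
  also have "\<dots> = realize_map Q (\<gamma> g) (realize_map P f t)"
    by (rule realize_map_comp[OF assms(1-3), symmetric])
  finally show "realize_map P f (realize_map P (\<alpha> g) t) = realize_map Q (\<gamma> g) (realize_map P f t)" .
qed

lemma equivariant_on_bary: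
  assumes "finite P" "\<And>g. g \<in> G \<Longrightarrow> poset_aut P le (\<alpha> g) (\<beta> g)"
  shows "equivariant_on G S (\<lambda>g. realize_map (pchains P le) ((`) (\<alpha> g))) (\<lambda>g. realize_map P (\<alpha> g))
           (bary P le)"
  using bary_realize_map_aut[OF assms(1) assms(2)] by (simp add: equivariant_on_def)

lemma equivariant_on_bary_inv:
  assumes "finite P" "\<And>g. g \<in> G \<Longrightarrow> poset_aut P le (\<alpha> g) (\<beta> g)"
  shows "equivariant_on G (realization P le) (\<lambda>g. realize_map P (\<alpha> g))
           (\<lambda>g. realize_map (pchains P le) ((`) (\<alpha> g))) (bary_inv P le)"
  using bary_inv_realize_map_aut[OF assms(1) assms(2)] by (simp add: equivariant_on_def)

lemma homotopic_with_equivariant_compose_right: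
  assumes "homotopic_with (equivariant_on G S \<alpha> \<beta>) (top_of_set S) Y f g"
    and "continuous_map (top_of_set T) (top_of_set S) h" "equivariant_on G T \<gamma> \<alpha> h"
  shows "homotopic_with (equivariant_on G T \<gamma> \<beta>) (top_of_set T) Y (f \<circ> h) (g \<circ> h)"
  by (rule homotopic_with_compose_continuous_map_right[OF assms(1,2)])
     (use equivariant_on_comp[OF assms(3)] continuous_map_image_subset_topspace[OF assms(2)] in simp)

lemma homotopic_with_equivariant_compose_left:
  assumes "homotopic_with (equivariant_on G S \<alpha> \<beta>) (top_of_set S) (top_of_set T) f g"
    and "continuous_map (top_of_set T) Z h" "equivariant_on G T \<beta> \<gamma> h"
  shows "homotopic_with (equivariant_on G S \<alpha> \<gamma>) (top_of_set S) Z (h \<circ> f) (h \<circ> g)"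
proof -
  have "homotopic_with (\<lambda>k. equivariant_on G S \<alpha> \<beta> k \<and> k ` S \<subseteq> T) (top_of_set S) (top_of_set T) f g"
    using assms(1) by (rule homotopic_with_mono) (auto simp: continuous_map_def)
  then show ?thesis
    by (rule homotopic_with_compose_continuous_map_left[OF _ assms(2)])
       (simp add: equivariant_on_comp[OF _ assms(3)])
qed

section \<open>Double orders\<close>

lemma partial_orderp_dsub: "partial_orderp dsub"
  by (auto simp: partial_orderp_def reflp_def antisymp_def transp_def dsub_def prod_eq_iff)

lemma partial_orderp_dsq: "partial_orderp dsq"
  by (auto simp: partial_orderp_def reflp_def antisymp_def transp_def dsq_def prod_eq_iff)

lemma spoD:
  assumes "spo A r"
  shows spo_subset: "r \<subseteq> A \<times> A" and spo_irrefl: "(a, a) \<notin> r"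
    and spo_trans: "(a, b) \<in> r \<Longrightarrow> (b, c) \<in> r \<Longrightarrow> (a, c) \<in> r"
    and spo_asym: "(a, b) \<in> r \<Longrightarrow> (b, a) \<notin> r"
  using assms unfolding spo_def irrefl_def trans_def by blast+

lemma double_orderD:
  assumes "double_order A d"
  shows double_order_fst: "spo A (fst d)" and double_order_snd: "spo A (snd d)"
    and double_order_total: "a \<in> A \<Longrightarrow> b \<in> A \<Longrightarrow> a \<noteq> b \<Longrightarrow>
      (a, b) \<in> fst d \<or> (b, a) \<in> fst d \<or> (a, b) \<in> snd d \<or> (b, a) \<in> snd d"
  using assms unfolding double_order_def by blast+

lemma RegD:
  assumes "d \<in> Reg A"
  shows Reg_double_order: "double_order A d" and Reg_semilinear: "semilinear A (fst d)"
    and Reg_fst_incomparable: "(a, b) \<in> fst d \<Longrightarrow> (a, b) \<notin> snd d \<and> (b, a) \<notin> snd d"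
  using assms unfolding Reg_def regular_def by blast+

lemma SemiReg_double_order: "d \<in> SemiReg A \<Longrightarrow> double_order A d"
  by (simp add: SemiReg_def)

lemma finite_double_orders: "finite A \<Longrightarrow> finite {d. double_order A d}"
proof (rule finite_subset)
  show "{d. double_order A d} \<subseteq> Pow (A \<times> A) \<times> Pow (A \<times> A)"
    using spo_subset[OF double_order_fst] spo_subset[OF double_order_snd] by (fastforce simp: mem_Times_iff)
qed simp

lemma finite_Reg: "finite A \<Longrightarrow> finite (Reg A)"
  by (rule finite_subset[OF _ finite_double_orders]) (auto dest: Reg_double_order)

lemma finite_SemiReg: "finite A \<Longrightarrow> finite (SemiReg A)"
  by (rule finite_subset[OF _ finite_double_orders]) (auto dest: SemiReg_double_order)

definition negatively_transitive_on :: "'a set \<Rightarrow> 'a rel \<Rightarrow> bool" where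
  "negatively_transitive_on A r \<longleftrightarrow> (\<forall>a b c. (a, b) \<in> r \<longrightarrow> c \<in> A \<longrightarrow> (a, c) \<in> r \<or> (c, b) \<in> r)"

lemma negatively_transitive_onD:
  "negatively_transitive_on A r \<Longrightarrow> (a, b) \<in> r \<Longrightarrow> c \<in> A \<Longrightarrow> (a, c) \<in> r \<or> (c, b) \<in> r"
  unfolding negatively_transitive_on_def by blast

lemma semilinear_imp_negatively_transitive_on: "semilinear A r \<Longrightarrow> negatively_transitive_on A r"
  unfolding semilinear_def negatively_transitive_on_def by auto

lemma negatively_transitive_on_trancl_Union:
  assumes "\<And>r. r \<in> R \<Longrightarrow> negatively_transitive_on A r"
  shows "negatively_transitive_on A ((\<Union>R)\<^sup>+)"
  unfolding negatively_transitive_on_def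
proof (intro allI impI)
  fix a b c assume ab: "(a, b) \<in> (\<Union>R)\<^sup>+" and c: "c \<in> A"
  from ab show "(a, c) \<in> (\<Union>R)\<^sup>+ \<or> (c, b) \<in> (\<Union>R)\<^sup>+"
  proof (induction rule: trancl_induct)
    case (base y)
    then obtain r where "r \<in> R" "(a, y) \<in> r" by blast
    then show ?case using negatively_transitive_onD[OF assms _ c] by blast
  next
    case (step y z)
    then show ?case by (meson trancl_into_trancl)
  qed
qed

lemma height_in_chain:
  assumes "finite L" "\<And>D D'. D \<in> L \<Longrightarrow> D' \<in> L \<Longrightarrow> D \<subseteq> D' \<or> D' \<subseteq> D"
  defines "height D \<equiv> card {D' \<in> L. D' \<subseteq> D}"
  shows "height ` L = {1..card L}" "D \<in> L \<Longrightarrow> D' \<in> L \<Longrightarrow> height D < height D' \<longleftrightarrow> D \<subset> D'"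
proof -
  have strict: "height D < height D'" if "D \<in> L" "D' \<in> L" "D \<subset> D'" for D D'
  proof -
    have "{D'' \<in> L. D'' \<subseteq> D} \<subset> {D'' \<in> L. D'' \<subseteq> D'}" using that by auto
    then show ?thesis unfolding height_def by (rule psubset_card_mono[rotated]) (simp add: assms(1))
  qed
  have mono: "height D \<le> height D'" if "D \<subseteq> D'" for D D'
    unfolding height_def by (rule card_mono) (use assms(1) that in auto)
  show iff: "height D < height D' \<longleftrightarrow> D \<subset> D'" if "D \<in> L" "D' \<in> L" for D D'
  proof
    assume "height D < height D'"
    then have "\<not> D' \<subseteq> D" using mono[of D' D] by linarith
    then show "D \<subset> D'" using assms(2)[OF that] by blast
  qed (rule strict[OF that])
  have inj: "inj_on height L"
  proof (rule inj_onI)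
    fix D D' assume "D \<in> L" "D' \<in> L" "height D = height D'"
    then show "D = D'" using iff[of D D'] iff[of D' D] assms(2)[of D D'] by auto
  qed
  have range: "height D \<in> {1..card L}" if "D \<in> L" for D
  proof -
    have "{D' \<in> L. D' \<subseteq> D} \<noteq> {}" using that by auto
    then have "1 \<le> height D" unfolding height_def using assms(1) by (simp add: Suc_le_eq card_gt_0_iff)
    moreover have "height D \<le> card L" unfolding height_def by (rule card_mono[OF assms(1)]) auto
    ultimately show ?thesis by simp
  qed
  show "height ` L = {1..card L}"
  proof (rule card_subset_eq)
    show "height ` L \<subseteq> {1..card L}" using range by blast
    show "card (height ` L) = card {1..card L}" using card_image[OF inj] by simp
  qed simp
qed

text \<open>Negative transitivity makes the down-sets a chain; an element is ranked by the height of its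
  down-set in that chain.\<close>
lemma semilinear_if_negatively_transitive_on:
  assumes "finite A" "spo A r" "negatively_transitive_on A r"
  shows "semilinear A r"
proof -
  define down where "down a = {c \<in> A. (c, a) \<in> r}" for a
  have less_iff: "(a, b) \<in> r \<longleftrightarrow> down a \<subset> down b" if "a \<in> A" "b \<in> A" for a b
  proof
    assume ab: "(a, b) \<in> r"
    then show "down a \<subset> down b"
      using that spo_trans[OF assms(2) _ ab] spo_irrefl[OF assms(2)] unfolding down_def by blast
  next
    assume "down a \<subset> down b"
    then obtain c where "c \<in> A" "(c, b) \<in> r" "(c, a) \<notin> r" unfolding down_def by blast
    then show "(a, b) \<in> r" using negatively_transitive_onD[OF assms(3) _ that(1)] by blast
  qed
  have chain: "down a \<subseteq> down b \<or> down b \<subseteq> down a" if "a \<in> A" "b \<in> A" for a b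
  proof (rule ccontr)
    assume "\<not> ?thesis"
    then obtain c c' where c: "c \<in> A" "(c, a) \<in> r" "(c, b) \<notin> r" and c': "c' \<in> A" "(c', b) \<in> r" "(c', a) \<notin> r"
      unfolding down_def by blast
    have "(b, a) \<in> r" "(a, b) \<in> r"
      using negatively_transitive_onD[OF assms(3) c(2) that(2)] c(3)
        negatively_transitive_onD[OF assms(3) c'(2) that(1)] c'(3) by blast+
    then show False using spo_asym[OF assms(2)] by blast
  qed
  define height where "height D = card {D' \<in> down ` A. D' \<subseteq> D}" for D
  have fin: "finite (down ` A)" using assms(1) by simp
  have "D \<subseteq> D' \<or> D' \<subseteq> D" if "D \<in> down ` A" "D' \<in> down ` A" for D D'
    using that chain by blast
  note height = height_in_chain[OF fin this, folded height_def]
  have "(\<lambda>a. height (down a)) ` A = {1..card (down ` A)}"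
    using height(1) by (simp add: image_image)
  moreover have "(a, b) \<in> r \<longleftrightarrow> height (down a) < height (down b)" if "a \<in> A" "b \<in> A" for a b
    using less_iff[OF that] height(2)[of "down a" "down b"] that by simp
  then have "r = {(a, b). a \<in> A \<and> b \<in> A \<and> height (down a) < height (down b)}"
    using spo_subset[OF assms(2)] by auto
  ultimately show ?thesis unfolding semilinear_def by blast
qed

lemma SemiReg_negatively_transitive_on:
  assumes "d \<in> SemiReg A"
  shows "negatively_transitive_on A (fst d)"
proof -
  obtain S where S: "S \<subseteq> Reg A" "d = ((\<Union>(fst ` S))\<^sup>+, (\<Union>(snd ` S))\<^sup>+)"
    using assms unfolding SemiReg_def by blast
  show ?thesis
    unfolding S(2) fst_conv by (rule negatively_transitive_on_trancl_Union)
      (use S(1) Reg_semilinear semilinear_imp_negatively_transitive_on in blast)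
qed

lemma SemiReg_semilinear: "finite A \<Longrightarrow> d \<in> SemiReg A \<Longrightarrow> semilinear A (fst d)"
  by (rule semilinear_if_negatively_transitive_on[OF _ double_order_fst[OF SemiReg_double_order]
        SemiReg_negatively_transitive_on])

lemma spo_rdiff:
  assumes "spo A r" "negatively_transitive_on A s"
  shows "spo A (rdiff r s)"
  unfolding spo_def
proof (intro conjI)
  show "rdiff r s \<subseteq> A \<times> A" "irrefl (rdiff r s)"
    using spo_subset[OF assms(1)] spo_irrefl[OF assms(1)] unfolding rdiff_def irrefl_def by blast+
  show "trans (rdiff r s)"
  proof (rule transI)
    fix a b c assume ab: "(a, b) \<in> rdiff r s" and bc: "(b, c) \<in> rdiff r s"
    then have "b \<in> A" using spo_subset[OF assms(1)] unfolding rdiff_def by blast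
    then have "(a, c) \<notin> s" "(c, a) \<notin> s"
      using ab bc negatively_transitive_onD[OF assms(2)] unfolding rdiff_def by blast+
    then show "(a, c) \<in> rdiff r s"
      using ab bc spo_trans[OF assms(1)] unfolding rdiff_def by blast
  qed
qed

lemma Fmap_in_Reg:
  assumes "finite A" "d \<in> SemiReg A"
  shows "Fmap d \<in> Reg A"
proof -
  have d: "double_order A d" by (rule SemiReg_double_order[OF assms(2)])
  have "double_order A (Fmap d)"
    unfolding double_order_def Fmap_def fst_conv snd_conv
    using double_order_fst[OF d]
      spo_rdiff[OF double_order_snd[OF d] SemiReg_negatively_transitive_on[OF assms(2)]]
      double_order_total[OF d] unfolding rdiff_def by blast
  then show ?thesis
    using SemiReg_semilinear[OF assms] by (auto simp: Reg_def regular_def Fmap_def rdiff_def)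
qed

lemma Fmap_mono:
  assumes "d \<in> SemiReg A" "d' \<in> SemiReg A" "dsub d d'"
  shows "dsq (Fmap d) (Fmap d')"
proof -
  have d: "double_order A d" and d': "double_order A d'"
    using SemiReg_double_order[OF assms(1)] SemiReg_double_order[OF assms(2)] .
  have fst: "fst d \<subseteq> fst d'" and snd: "snd d \<subseteq> snd d'" using assms(3) by (auto simp: dsub_def)
  have "(a, b) \<in> rdiff (snd d) (fst d)" if ab: "(a, b) \<in> rdiff (snd d') (fst d')" for a b
  proof -
    have "(a, b) \<in> snd d'" "(a, b) \<notin> fst d" "(b, a) \<notin> fst d"
      using ab fst unfolding rdiff_def by auto
    moreover have "a \<in> A" "b \<in> A" "a \<noteq> b"
      using spo_subset[OF double_order_snd[OF d']] spo_irrefl[OF double_order_snd[OF d']] calculation(1)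
      by auto
    moreover have "(b, a) \<notin> snd d"
      using snd spo_asym[OF double_order_snd[OF d'] calculation(1)] by blast
    ultimately show ?thesis using double_order_total[OF d] unfolding rdiff_def by blast
  qed
  then show ?thesis using fst by (auto simp: dsq_def Fmap_def)
qed

lemma Gmap_in_SemiReg:
  assumes c: "c \<in> pchains (Reg A) dsq"
  shows "Gmap c \<in> SemiReg A"
proof -
  let ?M = "chain_max dsq c" and ?m = "chain_min dsq c"
  have M: "?M \<in> Reg A" and m: "?m \<in> Reg A"
    using chain_max_mem[OF partial_orderp_dsq c] chain_min_mem[OF partial_orderp_dsq c]
      pchainsD(1)[OF c] by auto
  have "fst p \<subseteq> fst ?M" "snd p \<subseteq> snd ?m" if "p \<in> c" for p
    using chain_max_ge[OF partial_orderp_dsq c that] chain_min_le[OF partial_orderp_dsq c that]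
    by (simp_all add: dsq_def)
  then have "\<Union>(fst ` c) = fst ?M" "\<Union>(snd ` c) = snd ?m"
    using chain_max_mem[OF partial_orderp_dsq c] chain_min_mem[OF partial_orderp_dsq c] by blast+
  then have "Gmap c = ((\<Union>(fst ` c))\<^sup>+, (\<Union>(snd ` c))\<^sup>+)"
    using double_order_fst[OF Reg_double_order[OF M]] double_order_snd[OF Reg_double_order[OF m]]
    by (simp add: Gmap_def spo_def trancl_id)
  moreover have "double_order A (Gmap c)"
  proof -
    have "snd ?M \<subseteq> snd ?m"
      using chain_min_le[OF partial_orderp_dsq c chain_max_mem[OF partial_orderp_dsq c]]
      by (simp add: dsq_def)
    then show ?thesis
      unfolding double_order_def Gmap_def fst_conv snd_conv
      using double_order_fst[OF Reg_double_order[OF M]] double_order_snd[OF Reg_double_order[OF m]]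
        double_order_total[OF Reg_double_order[OF M]] by blast
  qed
  ultimately show ?thesis
    using pchainsD(1-3)[OF c] unfolding SemiReg_def by blast
qed

lemma Gmap_mono:
  assumes "c \<in> pchains (Reg A) dsq" "c' \<in> pchains (Reg A) dsq" "c \<subseteq> c'"
  shows "dsub (Gmap c) (Gmap c')"
proof -
  have "dsq (chain_max dsq c) (chain_max dsq c')" "dsq (chain_min dsq c') (chain_min dsq c)"
    using chain_max_mem[OF partial_orderp_dsq assms(1)] chain_max_ge[OF partial_orderp_dsq assms(2)]
      chain_min_mem[OF partial_orderp_dsq assms(1)] chain_min_le[OF partial_orderp_dsq assms(2)]
      assms(3) by blast+
  then show ?thesis by (simp add: dsq_def dsub_def Gmap_def)
qed

lemma Fmap_Gmap_above:
  assumes c: "c \<in> pchains (Reg A) dsq" and e: "e \<in> Reg A" and "dsq (chain_max dsq c) e"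
  shows "dsq (Fmap (Gmap c)) e"
proof -
  let ?M = "chain_max dsq c" and ?m = "chain_min dsq c"
  have Me: "fst ?M \<subseteq> fst e" "snd e \<subseteq> snd ?M" using assms(3) by (auto simp: dsq_def)
  have "snd ?M \<subseteq> snd ?m"
    using chain_min_le[OF partial_orderp_dsq c chain_max_mem[OF partial_orderp_dsq c]]
    by (simp add: dsq_def)
  then have "snd e \<subseteq> rdiff (snd ?m) (fst ?M)"
    using Me Reg_fst_incomparable[OF e] unfolding rdiff_def by blast
  then show ?thesis using Me by (simp add: dsq_def Fmap_def Gmap_def)
qed

lemma Fmap_Gmap_below:
  assumes c: "c \<in> pchains (Reg A) dsq" and e: "e \<in> Reg A" and "dsq e (chain_max dsq c)"
    and min: "dsq e (chain_min dsq c) \<or> dsq (chain_min dsq c) e"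
  shows "dsq e (Fmap (Gmap c))"
proof -
  let ?M = "chain_max dsq c" and ?m = "chain_min dsq c"
  have eM: "fst e \<subseteq> fst ?M" using assms(3) by (simp add: dsq_def)
  have "?m \<in> Reg A" using chain_min_mem[OF partial_orderp_dsq c] pchainsD(1)[OF c] by blast
  then have de: "double_order A e" and dm: "double_order A ?m"
    using Reg_double_order[OF e] Reg_double_order by blast+
  have "(a, b) \<in> snd e" if ab: "(a, b) \<in> rdiff (snd ?m) (fst ?M)" for a b
  proof -
    have ab': "(a, b) \<in> snd ?m" "(a, b) \<notin> fst e" "(b, a) \<notin> fst e"
      using ab eM unfolding rdiff_def by auto
    moreover have "a \<in> A" "b \<in> A" "a \<noteq> b"
      using spo_subset[OF double_order_snd[OF dm]] spo_irrefl[OF double_order_snd[OF dm]] ab'(1) by auto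
    moreover have "(b, a) \<notin> snd e"
      using min ab'(1) spo_asym[OF double_order_snd[OF de]] spo_asym[OF double_order_snd[OF dm]]
      by (auto simp: dsq_def)
    ultimately show ?thesis using double_order_total[OF de] by blast
  qed
  then show ?thesis using eM by (auto simp: dsq_def Fmap_def Gmap_def)
qed

lemma Fmap_Gmap_comparable:
  assumes c: "c \<in> pchains (Reg A) dsq" and e: "e \<in> Reg A"
    and comp: "\<And>x. x \<in> c \<Longrightarrow> dsq e x \<or> dsq x e"
  shows "dsq e (Fmap (Gmap c)) \<or> dsq (Fmap (Gmap c)) e"
  using Fmap_Gmap_above[OF c e] Fmap_Gmap_below[OF c e]
    comp[OF chain_max_mem[OF partial_orderp_dsq c]] comp[OF chain_min_mem[OF partial_orderp_dsq c]]
  by blast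

lemma image_Fmap_pchains:
  assumes "finite A" "c \<in> pchains (SemiReg A) dsub"
  shows "Fmap ` c \<in> pchains (Reg A) dsq"
proof -
  have "Fmap ` c \<subseteq> Reg A" using Fmap_in_Reg[OF assms(1)] pchainsD(1)[OF assms(2)] by blast
  moreover have "dsq x y \<or> dsq y x" if "x \<in> Fmap ` c" "y \<in> Fmap ` c" for x y
    using that pchainsD(1,4)[OF assms(2)] Fmap_mono by blast
  ultimately show ?thesis using pchainsD(2,3)[OF assms(2)] unfolding pchains_def by blast
qed

lemma Gmap_image_Fmap_le_chain_max:
  assumes "finite A" and c: "c \<in> pchains (SemiReg A) dsub"
  shows "dsub (Gmap (Fmap ` c)) (chain_max dsub c)"
proof -
  note c' = image_Fmap_pchains[OF assms]
  obtain d1 where d1: "d1 \<in> c" "chain_max dsq (Fmap ` c) = Fmap d1"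
    using chain_max_mem[OF partial_orderp_dsq c'] by blast
  obtain d0 where d0: "d0 \<in> c" "chain_min dsq (Fmap ` c) = Fmap d0"
    using chain_min_mem[OF partial_orderp_dsq c'] by blast
  show ?thesis
    using chain_max_ge[OF partial_orderp_dsub c d1(1)] chain_max_ge[OF partial_orderp_dsub c d0(1)] d0 d1
    by (auto simp: dsub_def Gmap_def Fmap_def rdiff_def)
qed

subsection \<open>The action of permutations\<close>

lemma act_rel_inv:
  assumes "\<sigma> permutes A"
  shows "act_rel (inv \<sigma>) (act_rel \<sigma> r) = r" "act_rel \<sigma> (act_rel (inv \<sigma>) r) = r"
  by (auto simp: act_rel_def permutes_inverses[OF assms])

lemma act_inv:
  assumes "\<sigma> permutes A"
  shows "act (inv \<sigma>) (act \<sigma> d) = d" "act \<sigma> (act (inv \<sigma>) d) = d"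
  by (simp_all add: act_def act_rel_inv[OF assms] prod_eq_iff)

lemma act_rel_subset_iff:
  assumes "\<sigma> permutes A"
  shows "act_rel \<sigma> r \<subseteq> act_rel \<sigma> r' \<longleftrightarrow> r \<subseteq> r'"
proof
  assume "act_rel \<sigma> r \<subseteq> act_rel \<sigma> r'"
  then have "act_rel (inv \<sigma>) (act_rel \<sigma> r) \<subseteq> act_rel (inv \<sigma>) (act_rel \<sigma> r')"
    by (auto simp: act_rel_def)
  then show "r \<subseteq> r'" by (simp add: act_rel_inv[OF assms])
qed (auto simp: act_rel_def)

lemma spo_act_rel:
  assumes "\<sigma> permutes A" "spo A r"
  shows "spo A (act_rel \<sigma> r)"
  unfolding spo_def
proof (intro conjI)
  show "act_rel \<sigma> r \<subseteq> A \<times> A"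
    using spo_subset[OF assms(2)] permutes_in_image[OF assms(1)] by (auto simp: act_rel_def)
  show "irrefl (act_rel \<sigma> r)" using spo_irrefl[OF assms(2)] by (auto simp: act_rel_def irrefl_def)
  show "trans (act_rel \<sigma> r)" using spo_trans[OF assms(2)] by (auto simp: act_rel_def intro: transI)
qed

lemma semilinear_act_rel:
  assumes "\<sigma> permutes A" "semilinear A r"
  shows "semilinear A (act_rel \<sigma> r)"
proof -
  obtain h :: "'a \<Rightarrow> nat" and l where h: "h ` A = {1..l}" "r = {(a,b). a \<in> A \<and> b \<in> A \<and> h a < h b}"
    using assms(2) unfolding semilinear_def by blast
  have "(h \<circ> \<sigma>) ` A = h ` (\<sigma> ` A)" by (simp add: image_comp)
  then have "(h \<circ> \<sigma>) ` A = {1..l}" using h(1) permutes_image[OF assms(1)] by simp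
  moreover have "act_rel \<sigma> r = {(a,b). a \<in> A \<and> b \<in> A \<and> (h \<circ> \<sigma>) a < (h \<circ> \<sigma>) b}"
    using h(2) permutes_in_image[OF assms(1)] by (auto simp: act_rel_def)
  ultimately show ?thesis unfolding semilinear_def by blast
qed

lemma double_order_act:
  assumes "\<sigma> permutes A" "double_order A d"
  shows "double_order A (act \<sigma> d)"
  unfolding double_order_def act_def fst_conv snd_conv
proof (intro conjI ballI impI)
  show "spo A (act_rel \<sigma> (fst d))" "spo A (act_rel \<sigma> (snd d))"
    using spo_act_rel[OF assms(1) double_order_fst[OF assms(2)]]
      spo_act_rel[OF assms(1) double_order_snd[OF assms(2)]] .
next
  fix a b assume "a \<in> A" "b \<in> A" "a \<noteq> b"
  then have "\<sigma> a \<in> A" "\<sigma> b \<in> A" "\<sigma> a \<noteq> \<sigma> b"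
    using permutes_in_image[OF assms(1)] permutes_inj[OF assms(1)] by (auto dest: injD)
  then show "(a, b) \<in> act_rel \<sigma> (fst d) \<or> (b, a) \<in> act_rel \<sigma> (fst d) \<or>
      (a, b) \<in> act_rel \<sigma> (snd d) \<or> (b, a) \<in> act_rel \<sigma> (snd d)"
    using double_order_total[OF assms(2)] by (simp add: act_rel_def)
qed

lemma act_in_Reg:
  assumes "\<sigma> permutes A" "d \<in> Reg A"
  shows "act \<sigma> d \<in> Reg A"
proof -
  have "double_order A (act \<sigma> d)" by (rule double_order_act[OF assms(1) Reg_double_order[OF assms(2)]])
  moreover have "semilinear A (fst (act \<sigma> d))"
    using semilinear_act_rel[OF assms(1) Reg_semilinear[OF assms(2)]] by (simp add: act_def)
  moreover have "(a, b) \<in> fst (act \<sigma> d) \<Longrightarrow> (a, b) \<notin> snd (act \<sigma> d) \<and> (b, a) \<notin> snd (act \<sigma> d)" for a b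
    using Reg_fst_incomparable[OF assms(2)] by (simp add: act_def act_rel_def)
  ultimately show ?thesis by (simp add: Reg_def regular_def)
qed

lemma act_rel_trancl:
  assumes "\<sigma> permutes A"
  shows "act_rel \<sigma> (r\<^sup>+) = (act_rel \<sigma> r)\<^sup>+"
proof -
  have "(\<sigma> a, \<sigma> b) \<in> r\<^sup>+" if "(a, b) \<in> (act_rel \<sigma> r)\<^sup>+" for a b
    using that by induction (auto simp: act_rel_def intro: trancl_into_trancl)
  moreover have "(inv \<sigma> a, inv \<sigma> b) \<in> (act_rel \<sigma> r)\<^sup>+" if "(a, b) \<in> r\<^sup>+" for a b
    using that by induction
      (auto simp: act_rel_def permutes_inverses[OF assms] intro: trancl_into_trancl)
  ultimately show ?thesis
    unfolding act_rel_def by (auto simp: permutes_inverses[OF assms]) (metis permutes_inverses(2)[OF assms])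
qed

lemma act_rel_Union: "act_rel \<sigma> (\<Union>R) = \<Union>(act_rel \<sigma> ` R)"
  by (auto simp: act_rel_def)

lemma act_in_SemiReg:
  assumes "\<sigma> permutes A" "d \<in> SemiReg A"
  shows "act \<sigma> d \<in> SemiReg A"
proof -
  obtain S where S: "finite S" "S \<noteq> {}" "S \<subseteq> Reg A" "d = ((\<Union>(fst ` S))\<^sup>+, (\<Union>(snd ` S))\<^sup>+)"
    using assms(2) unfolding SemiReg_def by blast
  have "act \<sigma> d = ((\<Union>(fst ` act \<sigma> ` S))\<^sup>+, (\<Union>(snd ` act \<sigma> ` S))\<^sup>+)"
    using S(4) by (simp add: act_def act_rel_trancl[OF assms(1)] act_rel_Union image_image)
  moreover have "act \<sigma> ` S \<subseteq> Reg A" using S(3) act_in_Reg[OF assms(1)] by blast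
  ultimately show ?thesis
    using double_order_act[OF assms(1) SemiReg_double_order[OF assms(2)]] S(1,2)
    unfolding SemiReg_def by blast
qed

lemma act_real_eq: "act_real P = (\<lambda>\<sigma>. realize_map P (act \<sigma>))"
  by (simp add: fun_eq_iff act_real_def)

lemma poset_aut_act_Reg:
  assumes "\<sigma> permutes A"
  shows "poset_aut (Reg A) dsq (act \<sigma>) (act (inv \<sigma>))"
  unfolding poset_aut_def
  using act_in_Reg[OF assms] act_in_Reg[OF permutes_inv[OF assms]] act_inv[OF assms]
  by (simp add: dsq_def act_def act_rel_subset_iff[OF assms])

lemma poset_aut_act_SemiReg:
  assumes "\<sigma> permutes A"
  shows "poset_aut (SemiReg A) dsub (act \<sigma>) (act (inv \<sigma>))"
  unfolding poset_aut_def
  using act_in_SemiReg[OF assms] act_in_SemiReg[OF permutes_inv[OF assms]] act_inv[OF assms]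
  by (simp add: dsub_def act_def act_rel_subset_iff[OF assms])

lemma Fmap_act: "Fmap (act \<sigma> d) = act \<sigma> (Fmap d)"
  by (auto simp: Fmap_def act_def act_rel_def rdiff_def)

lemma Gmap_image_act:
  assumes "\<sigma> permutes A" "c \<in> pchains (Reg A) dsq"
  shows "Gmap (act \<sigma> ` c) = act \<sigma> (Gmap c)"
  unfolding Gmap_def chain_max_image_aut[OF partial_orderp_dsq poset_aut_act_Reg[OF assms(1)] assms(2)]
    chain_min_image_aut[OF partial_orderp_dsq poset_aut_act_Reg[OF assms(1)] assms(2)]
  by (simp add: act_def)

section \<open>The homotopy equivalence\<close>

locale finite_ground_set =
  fixes A :: "'a set"
  assumes finite_A: "finite A"
begin

text \<open>\<open>Fr\<close> and \<open>Hr\<close> are the maps \<open>|F|\<close> and \<open>|G| \<circ> |sd|\<^sup>-\<^sup>1\<close> of the statement; \<open>Lr\<close> realizes the last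
  vertex map of \<open>sd R\<^sup>+(A)\<close>.\<close>

abbreviation perms where "perms \<equiv> {\<sigma>. \<sigma> permutes A}"
abbreviation sdR where "sdR \<equiv> pchains (Reg A) dsq"
abbreviation sdS where "sdS \<equiv> pchains (SemiReg A) dsub"
abbreviation realR where "realR \<equiv> realization (Reg A) dsq"
abbreviation realS where "realS \<equiv> realization (SemiReg A) dsub"
abbreviation real_sdR where "real_sdR \<equiv> realization sdR (\<subseteq>)"
abbreviation real_sdS where "real_sdS \<equiv> realization sdS (\<subseteq>)"
abbreviation act_sdR where "act_sdR \<sigma> \<equiv> realize_map sdR ((`) (act \<sigma>))"
abbreviation act_sdS where "act_sdS \<sigma> \<equiv> realize_map sdS ((`) (act \<sigma>))"
abbreviation Fr where "Fr \<equiv> realize_map (SemiReg A) Fmap"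
abbreviation Gr where "Gr \<equiv> realize_map sdR Gmap"
abbreviation Hr where "Hr \<equiv> Gr \<circ> bary_inv (Reg A) dsq"
abbreviation Lr where "Lr \<equiv> realize_map sdS (chain_max dsub)"
abbreviation GFr where "GFr \<equiv> realize_map sdS (\<lambda>c. Gmap (Fmap ` c))"
abbreviation sdFr where "sdFr \<equiv> realize_map sdS ((`) Fmap)"

lemma finite_posets: "finite (Reg A)" "finite (SemiReg A)" "finite sdR" "finite sdS"
  using finite_Reg[OF finite_A] finite_SemiReg[OF finite_A] finite_pchains by blast+

lemma poset_aut_perms:
  assumes "\<sigma> \<in> perms"
  shows "poset_aut (Reg A) dsq (act \<sigma>) (act (inv \<sigma>))" "poset_aut (SemiReg A) dsub (act \<sigma>) (act (inv \<sigma>))"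
    "poset_aut sdR (\<subseteq>) ((`) (act \<sigma>)) ((`) (act (inv \<sigma>)))"
    "poset_aut sdS (\<subseteq>) ((`) (act \<sigma>)) ((`) (act (inv \<sigma>)))"
  using assms by (simp_all add: poset_aut_act_Reg poset_aut_act_SemiReg poset_aut_pchains)

lemma Fmap_image: "Fmap ` SemiReg A \<subseteq> Reg A"
  using Fmap_in_Reg[OF finite_A] by blast

lemma monotone_on_Fmap: "monotone_on (SemiReg A) dsub dsq Fmap"
  by (auto intro!: monotone_onI Fmap_mono)

lemma Gmap_image: "Gmap ` sdR \<subseteq> SemiReg A"
  using Gmap_in_SemiReg by blast

lemma monotone_on_Gmap: "monotone_on sdR (\<subseteq>) dsub Gmap"
  by (auto intro!: monotone_onI Gmap_mono)

lemma continuous_map_Fr: "continuous_map (top_of_set realS) (top_of_set realR) Fr"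
  by (rule continuous_map_realize_map[OF finite_posets(2,1) Fmap_image monotone_on_Fmap])

lemma continuous_map_Gr: "continuous_map (top_of_set real_sdR) (top_of_set realS) Gr"
  by (rule continuous_map_realize_map[OF finite_posets(3,2) Gmap_image monotone_on_Gmap])

lemma continuous_map_Hr: "continuous_map (top_of_set realR) (top_of_set realS) Hr"
  by (rule continuous_map_compose[OF continuous_map_bary_inv[OF finite_posets(1)] continuous_map_Gr])

lemma equivariant_Fr: "equivariant_on perms S (act_real (SemiReg A)) (act_real (Reg A)) Fr"
  unfolding act_real_eq
  by (rule equivariant_on_realize_map[OF finite_posets(2,1) Fmap_image])
     (auto simp: Fmap_act act_in_SemiReg)

lemma equivariant_Gr: "equivariant_on perms S act_sdR (act_real (SemiReg A)) Gr"
  unfolding act_real_eq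
  by (rule equivariant_on_realize_map[OF finite_posets(3,2) Gmap_image])
     (use poset_autD(1)[OF poset_aut_perms(3)] Gmap_image_act in auto)

lemma equivariant_Hr: "equivariant_on perms realR (act_real (Reg A)) (act_real (SemiReg A)) Hr"
proof (rule equivariant_on_comp[OF _ equivariant_Gr])
  show "equivariant_on perms realR (act_real (Reg A)) act_sdR (bary_inv (Reg A) dsq)"
    unfolding act_real_eq by (rule equivariant_on_bary_inv[OF finite_posets(1) poset_aut_perms(1)])
  show "bary_inv (Reg A) dsq ` realR \<subseteq> real_sdR"
    using bary_inv_in_realization[OF finite_posets(1)] by blast
qed

subsection \<open>\<open>|F| \<circ> |G| \<circ> |sd|\<^sup>-\<^sup>1\<close> is homotopic to the identity\<close>

text \<open>With \<open>u = |sd|\<^sup>-\<^sup>1 x\<close>, the weights of \<open>|F| (|G| u)\<close> sit at the \<open>F (G c)\<close> for the chains \<open>c\<close> in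
  the support of \<open>u\<close>. These chains are nested and every vertex in the support of \<open>x\<close> lies on one
  of them, so it is comparable with all members of each \<open>c\<close>, hence with \<open>F (G c)\<close> by
  \<open>Fmap_Gmap_comparable\<close>.\<close>
lemma Fr_Hr_support_chain:
  assumes x: "x \<in> realR"
    and q: "0 < (Fr \<circ> Hr) x q \<or> 0 < x q" and q': "0 < (Fr \<circ> Hr) x q' \<or> 0 < x q'"
  shows "dsq q q' \<or> dsq q' q"
proof -
  define u where "u = bary_inv (Reg A) dsq x"
  have u: "u \<in> real_sdR" "bary (Reg A) dsq u = x"
    unfolding u_def using bary_inv[OF finite_posets(1) x] by auto
  have FG: "(Fr \<circ> Hr) x = realize_map sdR (Fmap \<circ> Gmap) u"
    using realize_map_comp[OF finite_posets(3,2) Gmap_image, of Fmap u] by (simp add: u_def)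
  have xx: "dsq e e' \<or> dsq e' e" if "0 < x e" "0 < x e'" for e e'
    using realizationD(4)[OF x that] .
  have pos_chain: "0 < x e" if "0 < u c" "e \<in> c" for c e
    using bary_pos_if_mem[OF finite_posets(1) u(1) that] u(2) by simp
  have cases: "(\<exists>c\<in>sdR. 0 < u c \<and> r = Fmap (Gmap c)) \<or> (r \<in> Reg A \<and> 0 < x r)"
    if "0 < (Fr \<circ> Hr) x r \<or> 0 < x r" for r
    using that
  proof
    assume "0 < (Fr \<circ> Hr) x r"
    then have "0 < realize_map sdR (Fmap \<circ> Gmap) u r" by (simp only: FG)
    then obtain c where "c \<in> sdR" "(Fmap \<circ> Gmap) c = r" "0 < u c"
      by (rule realize_map_posE[OF _ realizationD(1)[OF u(1)] finite_posets(3)])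
    then show ?thesis by auto
  qed (use realization_pos_mem[OF x] in blast)
  have vertex: "dsq e (Fmap (Gmap c)) \<or> dsq (Fmap (Gmap c)) e"
    if "c \<in> sdR" "0 < u c" "e \<in> Reg A" "0 < x e" for c e
    by (rule Fmap_Gmap_comparable[OF that(1,3)]) (use xx[OF that(4) pos_chain[OF that(2)]] in blast)
  have chains: "dsq (Fmap (Gmap c)) (Fmap (Gmap c')) \<or> dsq (Fmap (Gmap c')) (Fmap (Gmap c))"
    if "c \<in> sdR" "0 < u c" "c' \<in> sdR" "0 < u c'" for c c'
  proof -
    have mono: "dsq (Fmap (Gmap d)) (Fmap (Gmap d'))" if "d \<in> sdR" "d' \<in> sdR" "d \<subseteq> d'" for d d'
      using Fmap_mono[OF Gmap_in_SemiReg[OF that(1)] Gmap_in_SemiReg[OF that(2)] Gmap_mono[OF that]] .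
    show ?thesis using realizationD(4)[OF u(1) that(2,4)] mono that(1,3) by blast
  qed
  from cases[OF q] cases[OF q'] show ?thesis
    using vertex chains xx by blast
qed

lemma homotopic_Fr_Hr_id:
  "homotopic_with (equivariant_on perms realR (act_real (Reg A)) (act_real (Reg A)))
     (top_of_set realR) (top_of_set realR) (Fr \<circ> Hr) id"
proof (rule homotopic_with_convex_comb)
  show "continuous_map (top_of_set realR) (top_of_set realR) (Fr \<circ> Hr)"
    by (rule continuous_map_compose[OF continuous_map_Hr continuous_map_Fr])
  show "dsq q q' \<or> dsq q' q"
    if "x \<in> topspace (top_of_set realR)" "0 < (Fr \<circ> Hr) x q \<or> 0 < id x q"
      "0 < (Fr \<circ> Hr) x q' \<or> 0 < id x q'" for x q q'
    using Fr_Hr_support_chain that by simp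
  have "equivariant_on perms realR (act_real (Reg A)) (act_real (Reg A)) (Fr \<circ> Hr)"
    by (rule equivariant_on_comp[OF equivariant_Hr equivariant_Fr])
       (use continuous_map_image_subset_topspace[OF continuous_map_Hr] in simp)
  moreover have "equivariant_on perms realR (act_real (Reg A)) (act_real (Reg A)) id"
    by (simp add: equivariant_on_def)
  ultimately show "equivariant_on perms realR (act_real (Reg A)) (act_real (Reg A))
      (\<lambda>x q. (1 - s) * (Fr \<circ> Hr) x q + s * id x q)" for s
    unfolding act_real_eq by (rule equivariant_on_convex_comb)
qed simp

subsection \<open>\<open>|G| \<circ> |sd|\<^sup>-\<^sup>1 \<circ> |F|\<close> is homotopic to the identity\<close>

abbreviation bary_invS where "bary_invS \<equiv> bary_inv (SemiReg A) dsub"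

lemma continuous_map_bary_invS: "continuous_map (top_of_set realS) (top_of_set real_sdS) bary_invS"
  by (rule continuous_map_bary_inv[OF finite_posets(2)])

lemma equivariant_bary_invS: "equivariant_on perms realS (act_real (SemiReg A)) act_sdS bary_invS"
  unfolding act_real_eq by (rule equivariant_on_bary_inv[OF finite_posets(2) poset_aut_perms(2)])

lemma chain_max_act: "\<sigma> \<in> perms \<Longrightarrow> c \<in> sdS \<Longrightarrow> chain_max dsub (act \<sigma> ` c) = act \<sigma> (chain_max dsub c)"
  by (rule chain_max_image_aut[OF partial_orderp_dsub poset_aut_perms(2)])

lemma Gmap_image_Fmap_act:
  assumes "\<sigma> \<in> perms" "c \<in> sdS"
  shows "Gmap (Fmap ` act \<sigma> ` c) = act \<sigma> (Gmap (Fmap ` c))"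
proof -
  have "Fmap ` act \<sigma> ` c = act \<sigma> ` Fmap ` c" by (simp add: image_image Fmap_act)
  then show ?thesis using Gmap_image_act assms image_Fmap_pchains[OF finite_A assms(2)] by simp
qed

lemma chain_max_image: "chain_max dsub ` sdS \<subseteq> SemiReg A"
  using chain_max_mem[OF partial_orderp_dsub] pchainsD(1) by blast

lemma monotone_on_chain_max: "monotone_on sdS (\<subseteq>) dsub (chain_max dsub)"
  by (auto intro!: monotone_onI chain_max_mono[OF partial_orderp_dsub])

lemma Gmap_image_Fmap_image: "(\<lambda>c. Gmap (Fmap ` c)) ` sdS \<subseteq> SemiReg A"
  using Gmap_in_SemiReg image_Fmap_pchains[OF finite_A] by blast

lemma monotone_on_Gmap_image_Fmap: "monotone_on sdS (\<subseteq>) dsub (\<lambda>c. Gmap (Fmap ` c))"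
  by (auto intro!: monotone_onI Gmap_mono image_Fmap_pchains[OF finite_A])

lemma image_Fmap_image: "(`) Fmap ` sdS \<subseteq> sdR"
  using image_Fmap_pchains[OF finite_A] by blast

lemma equivariant_Lr: "equivariant_on perms S act_sdS (act_real (SemiReg A)) Lr"
  unfolding act_real_eq
  by (rule equivariant_on_realize_map[OF finite_posets(4,2) chain_max_image])
     (use poset_autD(1)[OF poset_aut_perms(4)] chain_max_act in auto)

lemma equivariant_sdFr: "equivariant_on perms S act_sdS act_sdR sdFr"
  by (rule equivariant_on_realize_map[OF finite_posets(4,3) image_Fmap_image])
     (use poset_autD(1)[OF poset_aut_perms(4)] in \<open>auto simp: image_image Fmap_act\<close>)

text \<open>The last vertex map \<open>|L|\<close>: the weights of \<open>|L| (|sd|\<^sup>-\<^sup>1 x)\<close> stay inside the support of \<open>x\<close>.\<close>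
lemma homotopic_id_Lr:
  "homotopic_with (equivariant_on perms realS (act_real (SemiReg A)) (act_real (SemiReg A)))
     (top_of_set realS) (top_of_set realS) id (Lr \<circ> bary_invS)"
proof (rule homotopic_with_convex_comb)
  show cont: "continuous_map (top_of_set realS) (top_of_set realS) (Lr \<circ> bary_invS)"
    by (rule continuous_map_compose[OF continuous_map_bary_invS
          continuous_map_realize_map[OF finite_posets(4,2) chain_max_image monotone_on_chain_max]])
  have pos: "0 < x q" if x: "x \<in> realS" and q: "0 < (Lr \<circ> bary_invS) x q" for x q
  proof -
    have u: "bary_invS x \<in> real_sdS" "bary (SemiReg A) dsub (bary_invS x) = x"
      using bary_inv[OF finite_posets(2) x] by auto
    obtain c where c: "c \<in> sdS" "chain_max dsub c = q" "0 < bary_invS x c"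
      by (rule realize_map_posE[OF q[unfolded o_apply] realizationD(1)[OF u(1)] finite_posets(4)])
    then have "q \<in> c" using chain_max_mem[OF partial_orderp_dsub c(1)] by simp
    then show ?thesis using bary_pos_if_mem[OF finite_posets(2) u(1) c(3)] u(2) by simp
  qed
  show "dsub q q' \<or> dsub q' q"
    if "x \<in> topspace (top_of_set realS)" "0 < id x q \<or> 0 < (Lr \<circ> bary_invS) x q"
      "0 < id x q' \<or> 0 < (Lr \<circ> bary_invS) x q'" for x q q'
  proof -
    have x: "x \<in> realS" using that(1) by simp
    have "0 < x q" "0 < x q'" using that(2,3) pos[OF x, of q] pos[OF x, of q'] by auto
    then show ?thesis by (rule realizationD(4)[OF x])
  qed
  have "equivariant_on perms realS (act_real (SemiReg A)) (act_real (SemiReg A)) (Lr \<circ> bary_invS)"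
    by (rule equivariant_on_comp[OF equivariant_bary_invS equivariant_Lr])
       (use bary_inv_in_realization[OF finite_posets(2)] in blast)
  moreover have "equivariant_on perms realS (act_real (SemiReg A)) (act_real (SemiReg A)) id"
    by (simp add: equivariant_on_def)
  ultimately show "equivariant_on perms realS (act_real (SemiReg A)) (act_real (SemiReg A))
      (\<lambda>x q. (1 - s) * id x q + s * (Lr \<circ> bary_invS) x q)" for s
    unfolding act_real_eq by (rule equivariant_on_convex_comb[rotated])
qed simp

lemma homotopic_GFr_Lr:
  "homotopic_with (equivariant_on perms realS (act_real (SemiReg A)) (act_real (SemiReg A)))
     (top_of_set realS) (top_of_set realS) (GFr \<circ> bary_invS) (Lr \<circ> bary_invS)"
proof -
  have "homotopic_with (equivariant_on perms real_sdS act_sdS (act_real (SemiReg A)))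
      (top_of_set real_sdS) (top_of_set realS) GFr Lr"
  proof (rule homotopic_with_sweep[OF finite_posets(4,2) partial_orderp_subset partial_orderp_dsub
        Gmap_image_Fmap_image chain_max_image monotone_on_Gmap_image_Fmap monotone_on_chain_max])
    show "dsub (Gmap (Fmap ` c)) (chain_max dsub c)" if "c \<in> sdS" for c
      by (rule Gmap_image_Fmap_le_chain_max[OF finite_A that])
    show "equivariant_on perms real_sdS act_sdS (act_real (SemiReg A)) h \<longleftrightarrow>
        equivariant_on perms real_sdS act_sdS (act_real (SemiReg A)) k"
      if "\<And>t. t \<in> real_sdS \<Longrightarrow> h t = k t" for h k
      by (rule equivariant_on_cong)
         (use realize_map_aut_in_realization[OF finite_posets(4) poset_aut_perms(4)] that in auto)
    show "equivariant_on perms real_sdS act_sdS (act_real (SemiReg A))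
        (sweep sdS (\<subseteq>) (\<lambda>c. Gmap (Fmap ` c)) (chain_max dsub) s)" for s
      unfolding act_real_eq equivariant_on_def
      using sweep_realize_map_aut[OF finite_posets(4,2) poset_aut_perms(4)
          Gmap_image_Fmap_image chain_max_image] Gmap_image_Fmap_act chain_max_act by simp
  qed
  then show ?thesis
    by (rule homotopic_with_equivariant_compose_right[OF _ continuous_map_bary_invS equivariant_bary_invS])
qed

lemma sd_Fmap_support:
  assumes u: "u \<in> real_sdS" and r: "0 < bary (Reg A) dsq (sdFr u) r \<or> 0 < Fr (bary (SemiReg A) dsub u) r"
  obtains c d where "c \<in> sdS" "0 < u c" "d \<in> c" "r = Fmap d"
proof -
  have un: "\<And>c. 0 \<le> u c" using realizationD(1)[OF u] .
  have "sdFr u \<in> real_sdR"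
    by (rule realize_map_in_realization[OF finite_posets(4,3) image_Fmap_image _ u])
       (auto intro: monotone_onI)
  then have sd: "sd_weights (Reg A) dsq (sdFr u)" by (simp add: realization_sd_iff)
  from r show ?thesis
  proof
    assume "0 < bary (Reg A) dsq (sdFr u) r"
    then obtain c' where c': "c' \<in> sdR" "0 < sdFr u c'" "r \<in> c'"
      by (auto simp: bary_pos_iff[OF finite_posets(1) sd] sd_support_def)
    obtain c where "c \<in> sdS" "Fmap ` c = c'" "0 < u c"
      by (rule realize_map_posE[OF c'(2) un finite_posets(4)])
    then show ?thesis using that c'(3) by blast
  next
    assume "0 < Fr (bary (SemiReg A) dsub u) r"
    then obtain d where d: "d \<in> SemiReg A" "Fmap d = r" "0 < bary (SemiReg A) dsub u d"
      by (rule realize_map_posE[OF _ bary_nonneg[OF un] finite_posets(2)])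
    have "sd_weights (SemiReg A) dsub u" using u by (simp add: realization_sd_iff)
    then obtain c where "c \<in> sdS" "0 < u c" "d \<in> c"
      using d(3) by (auto simp: bary_pos_iff[OF finite_posets(2)] sd_support_def)
    then show ?thesis using that d(2) by blast
  qed
qed

lemma homotopic_bary_sdFr_Fr_bary:
  "homotopic_with (equivariant_on perms real_sdS act_sdS (act_real (Reg A)))
     (top_of_set real_sdS) (top_of_set realR) (bary (Reg A) dsq \<circ> sdFr) (Fr \<circ> bary (SemiReg A) dsub)"
proof (rule homotopic_with_convex_comb)
  show "continuous_map (top_of_set real_sdS) (top_of_set realR) (bary (Reg A) dsq \<circ> sdFr)"
    by (rule continuous_map_compose[OF continuous_map_realize_map[OF finite_posets(4,3) image_Fmap_image]
          homeomorphic_imp_continuous_map[OF homeomorphic_map_bary[OF finite_posets(1)]]])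
       (auto intro: monotone_onI)
  show "continuous_map (top_of_set real_sdS) (top_of_set realR) (Fr \<circ> bary (SemiReg A) dsub)"
    by (rule continuous_map_compose[OF homeomorphic_imp_continuous_map[OF
          homeomorphic_map_bary[OF finite_posets(2)]] continuous_map_Fr])
  show "dsq q q' \<or> dsq q' q"
    if u: "u \<in> topspace (top_of_set real_sdS)"
      and q: "0 < (bary (Reg A) dsq \<circ> sdFr) u q \<or> 0 < (Fr \<circ> bary (SemiReg A) dsub) u q"
      and q': "0 < (bary (Reg A) dsq \<circ> sdFr) u q' \<or> 0 < (Fr \<circ> bary (SemiReg A) dsub) u q'" for u q q'
  proof -
    have u: "u \<in> real_sdS" using u by simp
    obtain c d where c: "c \<in> sdS" "0 < u c" "d \<in> c" "q = Fmap d"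
      by (rule sd_Fmap_support[OF u q[unfolded o_apply]])
    obtain c' d' where c': "c' \<in> sdS" "0 < u c'" "d' \<in> c'" "q' = Fmap d'"
      by (rule sd_Fmap_support[OF u q'[unfolded o_apply]])
    have "c \<subseteq> c' \<or> c' \<subseteq> c" using realizationD(4)[OF u c(2) c'(2)] .
    then have "dsub d d' \<or> dsub d' d" using pchainsD(4)[OF c(1)] pchainsD(4)[OF c'(1)] c(3) c'(3) by blast
    moreover have "d \<in> SemiReg A" "d' \<in> SemiReg A" using pchainsD(1) c c' by blast+
    ultimately show ?thesis using Fmap_mono c(4) c'(4) by blast
  qed
  have "equivariant_on perms real_sdS act_sdS (act_real (Reg A)) (bary (Reg A) dsq \<circ> sdFr)"
    by (rule equivariant_on_comp[OF equivariant_sdFr])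
       (auto simp: act_real_eq intro: equivariant_on_bary[OF finite_posets(1) poset_aut_perms(1)])
  moreover have "equivariant_on perms real_sdS act_sdS (act_real (Reg A)) (Fr \<circ> bary (SemiReg A) dsub)"
    by (rule equivariant_on_comp[OF _ equivariant_Fr])
       (auto simp: act_real_eq intro: equivariant_on_bary[OF finite_posets(2) poset_aut_perms(2)])
  ultimately show "equivariant_on perms real_sdS act_sdS (act_real (Reg A))
      (\<lambda>u q. (1 - s) * (bary (Reg A) dsq \<circ> sdFr) u q + s * (Fr \<circ> bary (SemiReg A) dsub) u q)" for s
    unfolding act_real_eq by (rule equivariant_on_convex_comb)
qed

lemma homotopic_GFr_Hr_Fr:
  "homotopic_with (equivariant_on perms realS (act_real (SemiReg A)) (act_real (SemiReg A)))
     (top_of_set realS) (top_of_set realS) (GFr \<circ> bary_invS) (Hr \<circ> Fr)"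
proof -
  have "homotopic_with (equivariant_on perms real_sdS act_sdS (act_real (SemiReg A)))
      (top_of_set real_sdS) (top_of_set realS) (Hr \<circ> (bary (Reg A) dsq \<circ> sdFr)) (Hr \<circ> (Fr \<circ> bary (SemiReg A) dsub))"
    by (rule homotopic_with_equivariant_compose_left[OF homotopic_bary_sdFr_Fr_bary
          continuous_map_Hr equivariant_Hr])
  then have "homotopic_with (equivariant_on perms realS (act_real (SemiReg A)) (act_real (SemiReg A)))
      (top_of_set realS) (top_of_set realS)
      (Hr \<circ> (bary (Reg A) dsq \<circ> sdFr) \<circ> bary_invS) (Hr \<circ> (Fr \<circ> bary (SemiReg A) dsub) \<circ> bary_invS)"
    by (rule homotopic_with_equivariant_compose_right[OF _ continuous_map_bary_invS equivariant_bary_invS])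
  then show ?thesis
  proof (rule homotopic_with_eq)
    fix t assume "t \<in> topspace (top_of_set realS)"
    then have t: "bary_invS t \<in> real_sdS" "bary (SemiReg A) dsub (bary_invS t) = t"
      using bary_inv[OF finite_posets(2)] by auto
    have "sdFr (bary_invS t) \<in> real_sdR"
      by (rule realize_map_in_realization[OF finite_posets(4,3) image_Fmap_image _ t(1)])
         (auto intro: monotone_onI)
    then show "(GFr \<circ> bary_invS) t = (Hr \<circ> (bary (Reg A) dsq \<circ> sdFr) \<circ> bary_invS) t"
      using realize_map_comp[OF finite_posets(4,3) image_Fmap_image, of Gmap "bary_invS t"]
      by (simp add: bary_inv_bary[OF finite_posets(1)] o_def)
    show "(Hr \<circ> Fr) t = (Hr \<circ> (Fr \<circ> bary (SemiReg A) dsub) \<circ> bary_invS) t"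
      using t(2) by simp
  next
    fix h k :: "('a dord \<Rightarrow> real) \<Rightarrow> ('a dord \<Rightarrow> real)"
    assume "\<And>t. t \<in> topspace (top_of_set realS) \<Longrightarrow> h t = k t"
    then show "equivariant_on perms realS (act_real (SemiReg A)) (act_real (SemiReg A)) h \<longleftrightarrow>
        equivariant_on perms realS (act_real (SemiReg A)) (act_real (SemiReg A)) k"
      by (intro equivariant_on_cong)
         (auto simp: act_real_eq intro: realize_map_aut_in_realization[OF finite_posets(2) poset_aut_perms(2)])
  qed
qed

lemma homotopic_Hr_Fr_id:
  "homotopic_with (equivariant_on perms realS (act_real (SemiReg A)) (act_real (SemiReg A)))
     (top_of_set realS) (top_of_set realS) (Hr \<circ> Fr) id"
  using homotopic_with_trans[OF homotopic_with_trans[OF homotopic_id_Lr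
        homotopic_with_symD[OF homotopic_GFr_Lr]] homotopic_GFr_Hr_Fr]
  by (rule homotopic_with_symD)

end

theorem proposition4p8:
  fixes A :: "'a set"
  assumes "finite A"
  defines "X \<equiv> top_of_set (realization (SemiReg A) dsub)"
      and "Y \<equiv> top_of_set (realization (Reg A) dsq)"
      and "Z \<equiv> top_of_set (realization (pchains (Reg A) dsq) (\<subseteq>))"
      and "Fr \<equiv> realize_map (SemiReg A) Fmap"
      and "Hr \<equiv> realize_map (pchains (Reg A) dsq) Gmap \<circ>
                 inv_into (realization (pchains (Reg A) dsq) (\<subseteq>)) (bary (Reg A) dsq)"
  shows "Fmap ` SemiReg A \<subseteq> Reg A \<and> monotone_on (SemiReg A) dsub dsq Fmap
    \<and> Gmap ` pchains (Reg A) dsq \<subseteq> SemiReg A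
    \<and> monotone_on (pchains (Reg A) dsq) (\<subseteq>) dsub Gmap
    \<and> homeomorphic_map Z Y (bary (Reg A) dsq)
    \<and> continuous_map X Y Fr \<and> continuous_map Y X Hr
    \<and> (\<forall>\<sigma>. \<sigma> permutes A \<longrightarrow>
         (\<forall>t\<in>topspace X. Fr (act_real (SemiReg A) \<sigma> t) = act_real (Reg A) \<sigma> (Fr t)) \<and>
         (\<forall>t\<in>topspace Y. Hr (act_real (Reg A) \<sigma> t) = act_real (SemiReg A) \<sigma> (Hr t)))
    \<and> homotopic_with (\<lambda>k. \<forall>\<sigma>. \<sigma> permutes A \<longrightarrow>
           (\<forall>t\<in>topspace X. k (act_real (SemiReg A) \<sigma> t) = act_real (SemiReg A) \<sigma> (k t)))
         X X (Hr \<circ> Fr) id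
    \<and> homotopic_with (\<lambda>k. \<forall>\<sigma>. \<sigma> permutes A \<longrightarrow>
           (\<forall>t\<in>topspace Y. k (act_real (Reg A) \<sigma> t) = act_real (Reg A) \<sigma> (k t)))
         Y Y (Fr \<circ> Hr) id"
proof -
  interpret finite_ground_set A by (rule finite_ground_set.intro[OF assms(1)])
  have topspaces: "topspace X = realization (SemiReg A) dsub" "topspace Y = realization (Reg A) dsq"
    unfolding X_def Y_def by simp_all
  have equivariant_eq: "equivariant_on {\<sigma>. \<sigma> permutes A} S \<alpha> \<alpha> =
      (\<lambda>k. \<forall>\<sigma>. \<sigma> permutes A \<longrightarrow> (\<forall>t\<in>S. k (\<alpha> \<sigma> t) = \<alpha> \<sigma> (k t)))" for S \<alpha>
    by (simp add: fun_eq_iff equivariant_on_def)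
  show ?thesis
    unfolding topspaces unfolding X_def Y_def Z_def Fr_def Hr_def bary_inv_def[symmetric]
    using Fmap_image monotone_on_Fmap Gmap_image monotone_on_Gmap
      homeomorphic_map_bary[OF finite_Reg[OF assms(1)]] continuous_map_Fr continuous_map_Hr
      equivariant_Fr equivariant_Hr homotopic_Hr_Fr_id homotopic_Fr_Hr_id
    by (simp add: equivariant_on_def equivariant_eq)
qed

end
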